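(* For every $d\ge 1$ there exist constants $\beta_d>0$ and $C_d>0$, depending only on $d$, such that the following holds. Let $S\subset\mathbb{R}^d$ be a compact set with \[ \mathrm{diam}(S)\le 1+\beta\qquad\text{and}\qquad \mathtt{rad}(S)\ge \mathrm{Jung}_d \] for some $0\le\beta\le\beta_d$. Then there exists a set $\Delta=\{x_0,\dots,x_d\}\subset\mathbb{R}^d$ which is the vertex set of a regular simplex of edge length $1$ such that every witness $W\subseteq S$ satisfies $\mathrm{dist}_H(W,\Delta)\le C_d\beta$.
   Context: $\mathrm{Jung}_d:=\sqrt{\frac{d}{2(d+1)}}$. For a bounded set $A\subset\mathbb{R}^d$, its Chebyshev radius is $\mathtt{rad}(A)=\inf_{c\in\mathbb{R}^d}\sup_{y\in A}\|c-y\|_2$ (the radius of the smallest enclosing ball), and $\mathrm{diam}(A)=\sup_{x,y\in A}\|x-y\|_2$. A witness for $S$ is a subset $W\subseteq S$ of cardinality $d+1$ with $\mathtt{rad}(W)\ge\mathrm{Jung}_d$. A regular simplex of edge length $1$ is a set of $d+1$ points of $\mathbb{R}^d$ at pairwise distance exactly $1$. For nonempty compact $A,B\subset\mathbb{R}^d$, the Hausdorff distance is $\mathrm{dist}_H(A,B)=\max\{\sup_{a\in A}\inf_{b\in B}\|a-b\|_2,\ \sup_{b\in B}\inf_{a\in A}\|a-b\|_2\}$. *)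

theory Defs
  imports "HOL-Analysis.Analysis"
begin

definition Jung :: "nat \<Rightarrow> real" where
  "Jung d = sqrt (real d / (2 * (real d + 1)))"

definition cheb_rad :: "'a::euclidean_space set \<Rightarrow> real" where
  "cheb_rad A = (INF c. SUP y\<in>A. dist c y)"

definition witness :: "'a::euclidean_space set \<Rightarrow> 'a set \<Rightarrow> bool" where
  "witness S W \<longleftrightarrow> W \<subseteq> S \<and> card W = DIM('a) + 1 \<and> cheb_rad W \<ge> Jung DIM('a)"

definition regular_unit_simplex :: "'a::euclidean_space set \<Rightarrow> bool" where
  "regular_unit_simplex D \<longleftrightarrow> card D = DIM('a) + 1 \<and>
     (\<forall>x\<in>D. \<forall>y\<in>D. x \<noteq> y \<longrightarrow> dist x y = 1)"

text \<open>Hausdorff distance (for nonempty compact sets).\<close>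
definition hausdorff_dist :: "'a::metric_space set \<Rightarrow> 'a set \<Rightarrow> real" where
  "hausdorff_dist A B = max (SUP a\<in>A. INF b\<in>B. dist a b) (SUP b\<in>B. INF a\<in>A. dist a b)"

end

theory Submission
  imports Defs
begin

section \<open>Regular simplices\<close>

definition centroid :: "(nat \<Rightarrow> 'a::real_vector) \<Rightarrow> nat \<Rightarrow> 'a" where
  "centroid y k = (1 / real k) *\<^sub>R (\<Sum>i<k. y i)"

definition regular_simplex :: "(nat \<Rightarrow> 'a::metric_space) \<Rightarrow> nat \<Rightarrow> bool" where
  "regular_simplex y k \<longleftrightarrow> (\<forall>i<k. \<forall>j<k. i \<noteq> j \<longrightarrow> dist (y i) (y j) = 1)"

text \<open>The centred vertices \<open>y i - centroid y k\<close> of a regular simplex have Gram matrix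
  \<open>I/2 - 1/(2k)\<close>, hence \<open>simplex_proj y k\<close> is the orthogonal projection onto their span.\<close>
definition simplex_proj :: "(nat \<Rightarrow> 'a::real_inner) \<Rightarrow> nat \<Rightarrow> 'a \<Rightarrow> 'a" where
  "simplex_proj y k z =
     (\<Sum>i<k. (2 * inner z (y i - centroid y k)) *\<^sub>R (y i - centroid y k))"

lemma power2_norm_diff:
  fixes x y :: "'a::real_inner"
  shows "(norm (x - y))\<^sup>2 = (norm x)\<^sup>2 - 2 * inner x y + (norm y)\<^sup>2"
  using dot_norm_neg[of x y] by simp

lemma sum_diff_centroid:
  assumes "k \<ge> 1"
  shows "(\<Sum>i<k. y i - centroid y k) = 0"
proof -
  have "(\<Sum>i<k. y i - centroid y k) = (\<Sum>i<k. y i) - real k *\<^sub>R centroid y k"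
    by (simp add: sum_subtractf sum_constant_scaleR)
  also have "real k *\<^sub>R centroid y k = (\<Sum>i<k. y i)"
    using assms by (simp add: centroid_def)
  finally show ?thesis by simp
qed

lemma sum_inner_diff_centroid:
  assumes "k \<ge> 1"
  shows "(\<Sum>i<k. inner z (y i - centroid y k)) = 0"
  using sum_diff_centroid[OF assms, of y] by (metis inner_sum_right inner_zero_right)

lemma norm_sum_scaleR_le:
  fixes x :: "nat \<Rightarrow> 'a::real_normed_vector"
  assumes "\<And>k. k < n \<Longrightarrow> norm (x k) \<le> 1"
  shows "norm (\<Sum>k<n. s k *\<^sub>R x k) \<le> (\<Sum>k<n. \<bar>s k\<bar>)"
proof -
  have "norm (\<Sum>k<n. s k *\<^sub>R x k) \<le> (\<Sum>k<n. \<bar>s k\<bar> * norm (x k))"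
    using norm_sum[of "\<lambda>k. s k *\<^sub>R x k" "{..<n}"] by simp
  also have "\<dots> \<le> (\<Sum>k<n. \<bar>s k\<bar> * 1)"
    using assms by (intro sum_mono mult_left_mono) auto
  finally show ?thesis by simp
qed

lemma norm_centred_vertex_sq:
  fixes y :: "nat \<Rightarrow> 'a::real_inner"
  assumes reg: "regular_simplex y k" and k: "k \<ge> 1" and "i < k"
  shows "(norm (y i - centroid y k))\<^sup>2 = (real k - 1) / (2 * real k)"
proof -
  define x where "x i = y i - centroid y k" for i
  define N where "N i = (norm (x i))\<^sup>2" for i
  have row: "real k * N i + (\<Sum>j<k. N j) = real k - 1" if "i < k" for i
  proof -
    have "(norm (x i - x j))\<^sup>2 = (if i = j then 0 else 1)" if "j < k" for j
      using reg \<open>i < k\<close> that by (simp add: x_def regular_simplex_def dist_norm)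
    hence "(\<Sum>j<k. if i = j then 0 else 1) = (\<Sum>j<k. N i - 2 * inner (x i) (x j) + N j)"
      unfolding N_def power2_norm_diff by simp
    moreover have "(\<Sum>j<k. if i = j then 0 else 1) = real k - 1"
      using \<open>i < k\<close> by (simp add: sum.If_cases Diff_eq[symmetric] card_Diff_singleton)
    ultimately have "real k - 1 = (\<Sum>j<k. N i - 2 * inner (x i) (x j) + N j)"
      by simp
    also have "\<dots> = real k * N i + (\<Sum>j<k. N j) - 2 * inner (x i) (\<Sum>j<k. x j)"
      by (simp add: sum_subtractf sum.distrib inner_sum_right sum_distrib_left)
    finally show ?thesis
      using sum_diff_centroid[OF k, of y] by (simp add: x_def)
  qed
  have "real k * (2 * (\<Sum>j<k. N j)) = (\<Sum>i<k. real k * N i + (\<Sum>j<k. N j))"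
    by (simp add: sum.distrib sum_distrib_left[symmetric])
  also have "\<dots> = real k * (real k - 1)"
    using row by simp
  finally have "(\<Sum>j<k. N j) = (real k - 1) / 2"
    using k by simp
  thus ?thesis
    using row[OF \<open>i < k\<close>] k by (simp add: N_def x_def field_simps)
qed

lemma inner_centred_vertices:
  fixes y :: "nat \<Rightarrow> 'a::real_inner"
  assumes reg: "regular_simplex y k" and k: "k \<ge> 1" and i: "i < k" and j: "j < k"
  shows "inner (y i - centroid y k) (y j - centroid y k) =
           (if i = j then 1/2 else 0) - 1 / (2 * real k)"
proof (cases "i = j")
  case True
  thus ?thesis
    using norm_centred_vertex_sq[OF reg k i] k by (simp add: power2_norm_eq_inner field_simps)
next
  case False
  have "(norm ((y i - centroid y k) - (y j - centroid y k)))\<^sup>2 = 1"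
    using reg i j False by (simp add: regular_simplex_def dist_norm)
  hence "(real k - 1) / (2 * real k) - 2 * inner (y i - centroid y k) (y j - centroid y k)
          + (real k - 1) / (2 * real k) = 1"
    unfolding power2_norm_diff[of "y i - centroid y k"] norm_centred_vertex_sq[OF reg k i]
              norm_centred_vertex_sq[OF reg k j] .
  moreover have "(real k - 1) / (2 * real k) = 1 / 2 - 1 / (2 * real k)"
    using k by (simp add: field_simps)
  ultimately show ?thesis using False by simp
qed

lemma norm_centred_vertex_le_1:
  fixes y :: "nat \<Rightarrow> 'a::real_inner"
  assumes "regular_simplex y k" "k \<ge> 1" "i < k"
  shows "norm (y i - centroid y k) \<le> 1"
proof -
  have "(real k - 1) / (2 * real k) \<le> 1"
    using assms(2) by (simp add: field_simps)
  hence "(norm (y i - centroid y k))\<^sup>2 \<le> 1\<^sup>2"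
    using norm_centred_vertex_sq[OF assms] by simp
  thus ?thesis by (rule power2_le_imp_le) simp
qed

lemma Jung_sq: "(Jung d)\<^sup>2 = real d / (2 * (real d + 1))"
  by (simp add: Jung_def)

lemma Jung_sq_double: "2 * (Jung d)\<^sup>2 = real d / (real d + 1)"
  by (simp add: Jung_sq) (simp add: field_simps)

lemma Jung_nonneg: "Jung d \<ge> 0"
  by (simp add: Jung_def)

lemma Jung_le_1: "Jung d \<le> 1"
proof -
  have "(Jung d)\<^sup>2 \<le> 1\<^sup>2" by (simp add: Jung_sq field_simps)
  thus ?thesis by (rule power2_le_imp_le) simp
qed

lemma sq_dist_vertex:
  fixes y :: "nat \<Rightarrow> 'a::real_inner"
  assumes "regular_simplex y k" "k \<ge> 1" "i < k"
  shows "(dist z (y i))\<^sup>2 = (norm (z - centroid y k))\<^sup>2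
           - 2 * inner (z - centroid y k) (y i - centroid y k) + (real k - 1) / (2 * real k)"
proof -
  have "z - y i = (z - centroid y k) - (y i - centroid y k)" by simp
  thus ?thesis
    using norm_centred_vertex_sq[OF assms] by (simp only: dist_norm power2_norm_diff)
qed

lemma sq_dist_vertex_Jung:
  fixes y :: "nat \<Rightarrow> 'a::real_inner"
  assumes "regular_simplex y (Suc d)" "i < Suc d"
  shows "(dist z (y i))\<^sup>2 = (norm (z - centroid y (Suc d)))\<^sup>2
           - 2 * inner (z - centroid y (Suc d)) (y i - centroid y (Suc d)) + (Jung d)\<^sup>2"
proof -
  have "(real (Suc d) - 1) / (2 * real (Suc d)) = (Jung d)\<^sup>2"
    by (simp add: Jung_sq)
  thus ?thesis using sq_dist_vertex[OF assms(1) _ assms(2), of z] by simp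
qed

lemma inner_simplex_proj:
  "inner w (simplex_proj y k z) =
     2 * (\<Sum>i<k. inner z (y i - centroid y k) * inner w (y i - centroid y k))"
  by (simp add: simplex_proj_def inner_sum_right sum_distrib_left mult.assoc)

lemma simplex_proj_orthogonal:
  assumes reg: "regular_simplex y k" and k: "k \<ge> 1" and j: "j < k"
  shows "inner (z - simplex_proj y k z) (y j - centroid y k) = 0"
proof -
  define a where "a i = inner z (y i - centroid y k)" for i
  have "inner (simplex_proj y k z) (y j - centroid y k)
        = 2 * (\<Sum>i<k. a i * inner (y i - centroid y k) (y j - centroid y k))"
    by (simp add: simplex_proj_def inner_sum_left a_def sum_distrib_left mult.assoc)
  also have "\<dots> = 2 * (\<Sum>i<k. a i * ((if i = j then 1/2 else 0) - 1 / (2 * real k)))"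
    using inner_centred_vertices[OF reg k _ j] by simp
  also have "\<dots> = a j - (\<Sum>i<k. a i) / real k"
    using j by (simp add: right_diff_distrib sum_subtractf sum_divide_distrib[symmetric]
                          if_distrib[of "\<lambda>x. _ * x"] sum.delta)
  also have "(\<Sum>i<k. a i) = 0"
    unfolding a_def by (rule sum_inner_diff_centroid[OF k])
  finally show ?thesis by (simp add: a_def inner_diff_left)
qed

lemma simplex_proj_orthogonal_range:
  assumes "regular_simplex y k" "k \<ge> 1"
  shows "inner (z - simplex_proj y k z) (simplex_proj y k w) = 0"
  using simplex_proj_orthogonal[OF assms] by (simp add: inner_simplex_proj)

lemma inner_self_simplex_proj:
  assumes "regular_simplex y k" "k \<ge> 1"
  shows "inner (simplex_proj y k z) (simplex_proj y k z) = inner z (simplex_proj y k z)"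
  using simplex_proj_orthogonal_range[OF assms, of z z] by (simp add: inner_diff_left)

lemma norm_simplex_proj_le:
  fixes y :: "nat \<Rightarrow> 'a::real_inner"
  assumes "regular_simplex y k" "k \<ge> 1" "\<And>i. i < k \<Longrightarrow> \<bar>2 * inner w (y i - centroid y k)\<bar> \<le> c"
  shows "norm (simplex_proj y k w) \<le> real k * c"
proof -
  have "norm (simplex_proj y k w) \<le> (\<Sum>i<k. \<bar>2 * inner w (y i - centroid y k)\<bar>)"
    unfolding simplex_proj_def using norm_centred_vertex_le_1[OF assms(1,2)] by (rule norm_sum_scaleR_le)
  also have "\<dots> \<le> (\<Sum>i<k. c)"
    using assms(3) by (intro sum_mono) auto
  finally show ?thesis by simp
qed

lemma regular_simplex_extend:
  assumes reg: "regular_simplex y k" and k: "k \<ge> 1"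
    and b: "b = w - simplex_proj y k w" "b \<noteq> 0"
  defines "p \<equiv> centroid y k + (sqrt ((real k + 1) / (2 * real k)) / norm b) *\<^sub>R b"
  shows "regular_simplex (y(k := p)) (Suc k)"
proof -
  define s where "s = sqrt ((real k + 1) / (2 * real k)) / norm b"
  have ss: "s * s * inner b b = (real k + 1) / (2 * real k)"
  proof -
    have "s * s * inner b b = (s * norm b)\<^sup>2"
      by (simp add: power_mult_distrib power2_eq_square flip: power2_norm_eq_inner)
    also have "\<dots> = (real k + 1) / (2 * real k)"
      using b by (simp add: s_def)
    finally show ?thesis .
  qed
  have new_dist: "dist (y i) p = 1" if i: "i < k" for i
  proof -
    have orth: "inner (y i - centroid y k) b = 0"
      using simplex_proj_orthogonal[OF reg k i, of w] b(1) by (simp add: inner_commute)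
    have "(dist (y i) p)\<^sup>2 = inner ((y i - centroid y k) - s *\<^sub>R b) ((y i - centroid y k) - s *\<^sub>R b)"
      by (simp add: p_def s_def dist_norm power2_norm_eq_inner algebra_simps)
    also have "\<dots> = (norm (y i - centroid y k))\<^sup>2 + s * s * inner b b"
      using orth by (simp add: inner_diff_left inner_diff_right inner_commute power2_norm_eq_inner)
    also have "\<dots> = (real k - 1) / (2 * real k) + (real k + 1) / (2 * real k)"
      using norm_centred_vertex_sq[OF reg k i] ss by simp
    also have "\<dots> = 1"
      using k by (simp add: field_simps)
    finally show ?thesis
      using zero_le_dist[of "y i" p] by (auto simp: power2_eq_1_iff)
  qed
  show ?thesis
    using reg new_dist by (auto simp: regular_simplex_def less_Suc_eq dist_commute)
qed

lemma trace_simplex_proj: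
  assumes "regular_simplex y k" "k \<ge> 1"
  shows "(\<Sum>b\<in>Basis. inner b (simplex_proj y k b)) = real k - 1"
proof -
  have "(\<Sum>b\<in>Basis. inner b (simplex_proj y k b))
        = (\<Sum>b\<in>Basis. 2 * (\<Sum>i<k. inner b (y i - centroid y k) * inner b (y i - centroid y k)))"
    by (simp add: inner_simplex_proj)
  also have "\<dots> = 2 * (\<Sum>i<k. \<Sum>b\<in>Basis. inner (y i - centroid y k) b * inner (y i - centroid y k) b)"
    by (simp add: sum_distrib_left[symmetric] sum.swap[of _ Basis] inner_commute)
  also have "\<dots> = 2 * (\<Sum>i<k. (norm (y i - centroid y k))\<^sup>2)"
    by (simp add: power2_norm_eq_inner euclidean_inner[symmetric])
  also have "\<dots> = 2 * (\<Sum>i<k. (real k - 1) / (2 * real k))"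
    using norm_centred_vertex_sq[OF assms] by simp
  also have "\<dots> = real k - 1"
    using assms(2) by simp
  finally show ?thesis .
qed

lemma simplex_proj_full:
  fixes y :: "nat \<Rightarrow> 'a::euclidean_space"
  assumes reg: "regular_simplex y (Suc DIM('a))"
  shows "simplex_proj y (Suc DIM('a)) z = z"
proof -
  let ?P = "simplex_proj y (Suc DIM('a))"
  have sq: "inner (b - ?P b) (b - ?P b) = 1 - inner b (?P b)" if "b \<in> Basis" for b
    using inner_self_simplex_proj[OF reg, of b] that
    by (simp add: inner_diff_left inner_diff_right inner_commute)
  have "(\<Sum>b\<in>Basis. inner (b - ?P b) (b - ?P b)) = 0"
    using trace_simplex_proj[OF reg] by (simp add: sq sum_subtractf)
  hence "\<forall>b\<in>Basis. ?P b = b"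
    by (simp add: sum_nonneg_eq_0_iff)
  show ?thesis
  proof (rule euclidean_eqI)
    fix b :: 'a assume b: "b \<in> Basis"
    have "inner (z - ?P z) (?P b) = 0" by (rule simplex_proj_orthogonal_range[OF reg]) simp
    thus "inner (?P z) b = inner z b" using \<open>\<forall>b\<in>Basis. ?P b = b\<close> b by (simp add: inner_diff_left)
  qed
qed

lemma centred_expansion:
  fixes y :: "nat \<Rightarrow> 'a::euclidean_space"
  assumes "regular_simplex y (Suc DIM('a))"
  shows "z = (\<Sum>k<Suc DIM('a). (2 * inner z (y k - centroid y (Suc DIM('a)))) *\<^sub>R
                                  (y k - centroid y (Suc DIM('a))))"
  using simplex_proj_full[OF assms, of z] by (simp add: simplex_proj_def)

lemma regular_simplex_exists:
  "k \<le> Suc DIM('a) \<Longrightarrow> \<exists>y::nat \<Rightarrow> 'a::euclidean_space. regular_simplex y k"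
proof (induction k)
  case 0
  show ?case by (simp add: regular_simplex_def)
next
  case (Suc k)
  show ?case
  proof (cases "k = 0")
    case True
    thus ?thesis by (auto simp: regular_simplex_def)
  next
    case False
    then obtain y :: "nat \<Rightarrow> 'a" where reg: "regular_simplex y k"
      using Suc by auto
    have "\<exists>b\<in>Basis. simplex_proj y k b \<noteq> b"
    proof (rule ccontr)
      assume "\<not> ?thesis"
      hence "(\<Sum>b\<in>(Basis::'a set). inner b (simplex_proj y k b)) = real DIM('a)"
        by simp
      thus False using trace_simplex_proj[OF reg] False Suc.prems by simp
    qed
    then obtain b :: 'a where "b - simplex_proj y k b \<noteq> 0"
      by (metis eq_iff_diff_eq_0)
    from regular_simplex_extend[OF reg _ refl this] False show ?thesis by auto
  qed
qed

lemma regular_unit_simplex_image: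
  fixes y :: "nat \<Rightarrow> 'a::euclidean_space"
  assumes reg: "regular_simplex y (Suc DIM('a))"
  shows "regular_unit_simplex (y ` {..<Suc DIM('a)})"
proof -
  have "inj_on y {..<Suc DIM('a)}"
    using reg by (auto simp: inj_on_def regular_simplex_def) (metis dist_self zero_neq_one)
  thus ?thesis
    using reg by (auto simp: regular_unit_simplex_def regular_simplex_def card_image)
qed

section \<open>Stability of regular simplices\<close>

definition almost_regular :: "(nat \<Rightarrow> 'a::metric_space) \<Rightarrow> nat \<Rightarrow> real \<Rightarrow> bool" where
  "almost_regular v k \<epsilon> \<longleftrightarrow> (\<forall>i<k. \<forall>j<k. i \<noteq> j \<longrightarrow> \<bar>(dist (v i) (v j))\<^sup>2 - 1\<bar> \<le> \<epsilon>)"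

lemma abs_power2_diff_1_perturb:
  fixes a b \<epsilon> e :: real
  assumes "\<bar>a\<^sup>2 - 1\<bar> \<le> \<epsilon>" "\<bar>b - a\<bar> \<le> e" "0 \<le> a" "0 \<le> b" "\<epsilon> \<le> 1" "e \<le> 1"
  shows "\<bar>b\<^sup>2 - 1\<bar> \<le> \<epsilon> + 5 * e"
proof -
  have "a \<le> 2"
  proof (rule ccontr)
    assume "\<not> a \<le> 2"
    hence "a\<^sup>2 > 2\<^sup>2" by (intro power_strict_mono) auto
    thus False using assms(1,5) by (auto simp: abs_le_iff)
  qed
  have "\<bar>b\<^sup>2 - a\<^sup>2\<bar> = \<bar>b - a\<bar> * \<bar>b + a\<bar>"
    by (simp add: power2_eq_square algebra_simps flip: abs_mult)
  also have "\<dots> \<le> e * 5"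
    using assms \<open>a \<le> 2\<close> by (intro mult_mono) (auto simp: abs_le_iff)
  finally show ?thesis using assms(1) by (auto simp: abs_le_iff)
qed

lemma abs_sqrt_diff_le:
  fixes H B :: real
  assumes "1/4 \<le> H" "0 \<le> B"
  shows "\<bar>sqrt H - sqrt B\<bar> \<le> 2 * \<bar>H - B\<bar>"
proof -
  have "1/2 \<le> sqrt H"
    using real_sqrt_le_mono[OF assms(1)] by (simp add: real_sqrt_divide)
  hence "1/2 \<le> sqrt H + sqrt B"
    using real_sqrt_ge_zero[OF assms(2)] by linarith
  hence "\<bar>sqrt H - sqrt B\<bar> * (1/2) \<le> \<bar>sqrt H - sqrt B\<bar> * (sqrt H + sqrt B)"
    by (intro mult_left_mono) auto
  also have "\<dots> = \<bar>(sqrt H - sqrt B) * (sqrt H + sqrt B)\<bar>"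
    using \<open>1/2 \<le> sqrt H + sqrt B\<close> by (simp add: abs_mult)
  also have "(sqrt H - sqrt B) * (sqrt H + sqrt B) = H - B"
    using assms by (simp add: algebra_simps)
  finally show ?thesis by simp
qed

lemma norm_rescale_diff_le:
  fixes b :: "'a::real_normed_vector"
  assumes "1/4 \<le> H"
  shows "norm ((sqrt H / norm b) *\<^sub>R b - b) \<le> 2 * \<bar>H - (norm b)\<^sup>2\<bar>"
proof (cases "b = 0")
  case False
  have "(sqrt H / norm b) *\<^sub>R b - b = (sqrt H / norm b - 1) *\<^sub>R b"
    by (simp add: scaleR_diff_left)
  hence "norm ((sqrt H / norm b) *\<^sub>R b - b) = \<bar>sqrt H / norm b - 1\<bar> * norm b"
    by simp
  also have "\<dots> = \<bar>(sqrt H / norm b - 1) * norm b\<bar>"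
    by (simp add: abs_mult)
  also have "\<dots> = \<bar>sqrt H - sqrt ((norm b)\<^sup>2)\<bar>"
    using False by (simp add: left_diff_distrib)
  also have "\<dots> \<le> 2 * \<bar>H - (norm b)\<^sup>2\<bar>"
    using assms by (intro abs_sqrt_diff_le) auto
  finally show ?thesis .
qed simp

lemma centred_point_estimates:
  fixes y :: "nat \<Rightarrow> 'a::real_inner"
  assumes reg: "regular_simplex y k" and k: "k \<ge> 1"
    and near: "\<And>i. i < k \<Longrightarrow> \<bar>(dist z (y i))\<^sup>2 - 1\<bar> \<le> \<eta>"
  defines "g \<equiv> centroid y k"
  shows "\<bar>(norm (z - g))\<^sup>2 - (real k + 1) / (2 * real k)\<bar> \<le> \<eta>"
    and "\<And>i. i < k \<Longrightarrow> \<bar>2 * inner (z - g) (y i - g)\<bar> \<le> 2 * \<eta>"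
proof -
  define J where "J = (real k - 1) / (2 * real k)"
  have expand: "(dist z (y i))\<^sup>2 = (norm (z - g))\<^sup>2 - 2 * inner (z - g) (y i - g) + J"
    if "i < k" for i
    using sq_dist_vertex[OF reg k that] by (simp add: g_def J_def)
  have "(\<Sum>i<k. (dist z (y i))\<^sup>2 - 1) = real k * ((norm (z - g))\<^sup>2 + J - 1)"
    using sum_inner_diff_centroid[OF k, of "z - g" y]
    by (simp add: expand sum_subtractf sum.distrib algebra_simps g_def
             flip: sum_distrib_left)
  hence "real k * \<bar>(norm (z - g))\<^sup>2 + J - 1\<bar> = \<bar>\<Sum>i<k. (dist z (y i))\<^sup>2 - 1\<bar>"
    using k by (simp add: abs_mult)
  also have "\<dots> \<le> (\<Sum>i<k. \<bar>(dist z (y i))\<^sup>2 - 1\<bar>)"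
    by (rule sum_abs)
  also have "\<dots> \<le> real k * \<eta>"
    using sum_mono[of "{..<k}" _ "\<lambda>_. \<eta>"] near by simp
  finally have total: "\<bar>(norm (z - g))\<^sup>2 + J - 1\<bar> \<le> \<eta>"
    by (rule mult_left_le_imp_le) (use k in simp)
  moreover have "J - 1 = - ((real k + 1) / (2 * real k))"
    using k by (simp add: J_def field_simps)
  ultimately show "\<bar>(norm (z - g))\<^sup>2 - (real k + 1) / (2 * real k)\<bar> \<le> \<eta>"
    by simp
  show "\<bar>2 * inner (z - g) (y i - g)\<bar> \<le> 2 * \<eta>" if "i < k" for i
    using expand[OF that] near[OF that] total by (simp add: abs_le_iff)
qed

lemma regular_simplex_extend_near:
  fixes y :: "nat \<Rightarrow> 'a::real_inner"
  assumes reg: "regular_simplex y k" and k: "k \<ge> 1"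
    and near: "\<And>i. i < k \<Longrightarrow> \<bar>(dist z (y i))\<^sup>2 - 1\<bar> \<le> \<eta>"
    and small: "8 * (real k)\<^sup>2 * \<eta> \<le> 1"
  shows "\<exists>p. regular_simplex (y(k := p)) (Suc k) \<and> dist p z \<le> (2 * real k + 4) * \<eta>"
proof -
  define g where "g = centroid y k"
  define H where "H = (real k + 1) / (2 * real k)"
  define a where "a = simplex_proj y k (z - g)"
  define b where "b = (z - g) - a"
  note est = centred_point_estimates[OF reg k near, folded g_def H_def]
  have \<eta>: "0 \<le> \<eta>" using near[of 0] k by linarith
  have "1 * \<eta> \<le> (real k)\<^sup>2 * \<eta>"
    using k \<eta> by (intro mult_right_mono) simp_all
  hence \<eta>_le: "\<eta> \<le> 1/8" using small by (simp add: mult.assoc)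
  have norm_a: "norm a \<le> real k * (2 * \<eta>)"
    unfolding a_def g_def by (rule norm_simplex_proj_le[OF reg k est(2)[unfolded g_def]])
  have "(norm a)\<^sup>2 \<le> (real k * (2 * \<eta>))\<^sup>2"
    using norm_a by (intro power_mono) auto
  also have "\<dots> = (8 * (real k)\<^sup>2 * \<eta>) * (\<eta> / 2)"
    by (simp add: power2_eq_square)
  also have "\<dots> \<le> \<eta>"
    using mult_right_mono[OF small, of "\<eta> / 2"] \<eta> by simp
  finally have "(norm a)\<^sup>2 \<le> \<eta>" .
  moreover have "inner b a = 0"
    using simplex_proj_orthogonal_range[OF reg k, of "z - g" "z - g"] by (simp add: a_def b_def g_def)
  hence "(norm (z - g))\<^sup>2 = (norm a)\<^sup>2 + (norm b)\<^sup>2"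
    by (simp add: b_def power2_norm_eq_inner inner_diff_left inner_diff_right inner_commute)
  ultimately have b_sq: "\<bar>H - (norm b)\<^sup>2\<bar> \<le> 2 * \<eta>"
    using est(1) zero_le_power2[of "norm a"] unfolding abs_le_iff by linarith
  have "H \<ge> 1/2" using k by (simp add: H_def field_simps)
  hence "(norm b)\<^sup>2 \<ge> 1/4" using b_sq \<eta>_le by (simp add: abs_le_iff)
  hence "b \<noteq> 0" by auto
  define p where "p = g + (sqrt H / norm b) *\<^sub>R b"
  have "regular_simplex (y(k := p)) (Suc k)"
    using regular_simplex_extend[OF reg k _ \<open>b \<noteq> 0\<close>, of "z - g"]
    by (simp add: p_def H_def g_def a_def b_def)
  moreover have "p - z = ((sqrt H / norm b) *\<^sub>R b - b) - a"
    by (simp add: p_def b_def algebra_simps)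
  hence "dist p z \<le> 2 * \<bar>H - (norm b)\<^sup>2\<bar> + norm a"
    using norm_triangle_ineq4[of "(sqrt H / norm b) *\<^sub>R b - b" a] norm_rescale_diff_le[of H b]
          \<open>H \<ge> 1/2\<close> by (simp add: dist_norm)
  hence "dist p z \<le> (2 * real k + 4) * \<eta>"
    using b_sq norm_a by (simp add: algebra_simps)
  ultimately show ?thesis by blast
qed

lemma almost_regular_step:
  fixes y v :: "nat \<Rightarrow> 'a::real_inner"
  assumes reg: "regular_simplex y k" and k: "k \<ge> 1"
    and near: "almost_regular v (Suc k) \<epsilon>" and \<epsilon>: "0 \<le> \<epsilon>"
    and close: "\<And>i. i < k \<Longrightarrow> dist (y i) (v i) \<le> C * \<epsilon>" and C: "C > 0"
    and small: "8 * (real k)\<^sup>2 * (1 + 5 * C) * \<epsilon> \<le> 1"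
  shows "\<exists>y'. regular_simplex y' (Suc k) \<and>
           (\<forall>i<Suc k. dist (y' i) (v i) \<le> ((2 * real k + 4) * (1 + 5 * C) + C) * \<epsilon>)"
proof -
  define \<eta> where "\<eta> = (1 + 5 * C) * \<epsilon>"
  have "1 \<le> (real k)\<^sup>2" using k by simp
  hence "1 * \<eta> \<le> (8 * (real k)\<^sup>2) * \<eta>"
    using \<epsilon> C by (intro mult_right_mono) (simp_all add: \<eta>_def)
  hence "\<eta> \<le> 1" using small by (simp add: \<eta>_def mult.assoc)
  moreover have \<eta>_eq: "\<eta> = \<epsilon> + 5 * (C * \<epsilon>)" and "0 \<le> C * \<epsilon>"
    using \<epsilon> C by (simp_all add: \<eta>_def algebra_simps)
  ultimately have \<epsilon>_le: "\<epsilon> \<le> 1" and C\<epsilon>_le: "C * \<epsilon> \<le> 1"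
    using \<epsilon> by linarith+
  have "\<bar>(dist (v k) (y i))\<^sup>2 - 1\<bar> \<le> \<eta>" if i: "i < k" for i
  proof -
    have vv: "\<bar>(dist (v k) (v i))\<^sup>2 - 1\<bar> \<le> \<epsilon>"
      using near i by (auto simp: almost_regular_def)
    have "\<bar>dist (v k) (y i) - dist (v k) (v i)\<bar> \<le> C * \<epsilon>"
      using close[OF i] dist_triangle[of "v k" "y i" "v i"] dist_triangle[of "v k" "v i" "y i"]
      by (simp add: dist_commute abs_le_iff)
    from abs_power2_diff_1_perturb[OF vv this zero_le_dist zero_le_dist \<epsilon>_le C\<epsilon>_le]
    show ?thesis by (simp add: \<eta>_eq)
  qed
  then obtain p where "regular_simplex (y(k := p)) (Suc k)" and p: "dist p (v k) \<le> (2 * real k + 4) * \<eta>"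
    using regular_simplex_extend_near[OF reg k, of "v k" \<eta>] small by (auto simp: \<eta>_def mult.assoc)
  moreover have "dist ((y(k := p)) i) (v i) \<le> ((2 * real k + 4) * (1 + 5 * C) + C) * \<epsilon>"
    if "i < Suc k" for i
  proof -
    have split: "((2 * real k + 4) * (1 + 5 * C) + C) * \<epsilon> = (2 * real k + 4) * \<eta> + C * \<epsilon>"
      by (simp add: \<eta>_def algebra_simps)
    have "0 \<le> C * \<epsilon>" "0 \<le> (2 * real k + 4) * \<eta>"
      using C \<epsilon> by (simp_all add: \<eta>_def)
    thus ?thesis using that p close[of i] by (auto simp: split less_Suc_eq)
  qed
  ultimately show ?thesis by blast
qed

lemma almost_regular_near_regular:
  assumes "k \<ge> 1"
  shows "\<exists>\<delta>>0. \<exists>C>0. \<forall>(v :: nat \<Rightarrow> 'a::real_inner) \<epsilon>.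
           0 \<le> \<epsilon> \<and> \<epsilon> \<le> \<delta> \<and> almost_regular v k \<epsilon> \<longrightarrow>
           (\<exists>y. regular_simplex y k \<and> (\<forall>i<k. dist (y i) (v i) \<le> C * \<epsilon>))"
  using assms
proof (induction k rule: nat_induct_at_least)
  case base
  show ?case
  proof (intro exI[of _ 1] conjI allI impI)
    fix v :: "nat \<Rightarrow> 'a" and \<epsilon> :: real
    assume "0 \<le> \<epsilon> \<and> \<epsilon> \<le> 1 \<and> almost_regular v 1 \<epsilon>"
    thus "\<exists>y. regular_simplex y 1 \<and> (\<forall>i<1. dist (y i) (v i) \<le> 1 * \<epsilon>)"
      by (intro exI[of _ v]) (simp add: regular_simplex_def)
  qed simp_all
next
  case (Suc k)
  then obtain \<delta> C where \<delta>: "\<delta> > 0" and C: "C > 0" and IH: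
    "\<And>(v :: nat \<Rightarrow> 'a) \<epsilon>. 0 \<le> \<epsilon> \<Longrightarrow> \<epsilon> \<le> \<delta> \<Longrightarrow> almost_regular v k \<epsilon> \<Longrightarrow>
       \<exists>y. regular_simplex y k \<and> (\<forall>i<k. dist (y i) (v i) \<le> C * \<epsilon>)"
    by blast
  define \<delta>' where "\<delta>' = min \<delta> (1 / (8 * (real k)\<^sup>2 * (1 + 5 * C)))"
  define C' where "C' = (2 * real k + 4) * (1 + 5 * C) + C"
  have "\<delta>' > 0" "C' > 0"
    using \<delta> C Suc.hyps by (simp_all add: \<delta>'_def C'_def add_pos_pos)
  moreover have "\<exists>y. regular_simplex y (Suc k) \<and> (\<forall>i<Suc k. dist (y i) (v i) \<le> C' * \<epsilon>)"
    if \<epsilon>: "0 \<le> \<epsilon>" "\<epsilon> \<le> \<delta>'" and near: "almost_regular v (Suc k) \<epsilon>" for v :: "nat \<Rightarrow> 'a" and \<epsilon>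
  proof -
    have "almost_regular v k \<epsilon>"
      using near by (auto simp: almost_regular_def)
    then obtain y where "regular_simplex y k" "\<forall>i<k. dist (y i) (v i) \<le> C * \<epsilon>"
      using IH[of \<epsilon> v] \<epsilon> by (auto simp: \<delta>'_def)
    moreover have "8 * (real k)\<^sup>2 * (1 + 5 * C) * \<epsilon> \<le> 1"
    proof -
      have "8 * (real k)\<^sup>2 * (1 + 5 * C) > 0" using C Suc.hyps by simp
      moreover have "\<epsilon> \<le> 1 / (8 * (real k)\<^sup>2 * (1 + 5 * C))" using \<epsilon> by (simp add: \<delta>'_def)
      ultimately show ?thesis by (simp add: pos_le_divide_eq mult.commute)
    qed
    ultimately show ?thesis
      using almost_regular_step[OF _ Suc.hyps(1) near \<epsilon>(1) _ C] by (simp add: C'_def)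
  qed
  ultimately show ?case by blast
qed

section \<open>Points close to a full-dimensional regular simplex\<close>

lemma add_sq_le:
  fixes a t :: real
  assumes "0 \<le> a" "a \<le> 1" "0 \<le> t" "t \<le> 1"
  shows "(a + t)\<^sup>2 \<le> a\<^sup>2 + 3 * t"
proof -
  have "(a + t)\<^sup>2 = a\<^sup>2 + 2 * a * t + t * t" by (simp add: power2_eq_square algebra_simps)
  also have "\<dots> \<le> a\<^sup>2 + 2 * 1 * t + 1 * t"
    using assms by (intro add_mono mult_right_mono mult_left_mono) auto
  finally show ?thesis by simp
qed

lemma summand_le_sum_plus:
  fixes a :: "nat \<Rightarrow> real"
  assumes "k < n" "\<And>j. j < n \<Longrightarrow> - b \<le> a j"
  shows "a k \<le> (\<Sum>j<n. a j) + real (n - 1) * b"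
proof -
  have "(\<Sum>j\<in>{..<n} - {k}. - b) \<le> (\<Sum>j\<in>{..<n} - {k}. a j)"
    using assms(2) by (intro sum_mono) auto
  moreover have "(\<Sum>j<n. a j) = a k + (\<Sum>j\<in>{..<n} - {k}. a j)"
    using assms(1) by (simp add: sum.remove)
  ultimately show ?thesis using assms(1) by simp
qed

lemma dist_centroid_le:
  fixes y :: "nat \<Rightarrow> 'a::euclidean_space"
  defines "n \<equiv> Suc DIM('a)"
  assumes reg: "regular_simplex y n"
    and near: "\<And>k. k < n \<Longrightarrow> dist (y k) c \<le> Jung DIM('a) + \<eta>"
    and \<eta>: "0 \<le> \<eta>" "\<eta> \<le> 1"
  shows "dist c (centroid y n) \<le> 3 * (real n)\<^sup>2 * \<eta>"
proof -
  define g where "g = centroid y n"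
  define s where "s k = 2 * inner (c - g) (y k - g)" for k
  have "(\<Sum>k<n. s k) = 0"
    using sum_inner_diff_centroid[of n "c - g" y] by (simp add: s_def g_def n_def flip: sum_distrib_left)
  have s_ge: "- (3 * \<eta>) \<le> s k" if "k < n" for k
  proof -
    have "(norm (c - g))\<^sup>2 - s k + (Jung DIM('a))\<^sup>2 = (dist c (y k))\<^sup>2"
      using sq_dist_vertex_Jung[OF reg[unfolded n_def] that[unfolded n_def], of c]
      by (simp add: s_def g_def n_def)
    also have "\<dots> \<le> (Jung DIM('a) + \<eta>)\<^sup>2"
      using near[OF that] by (simp add: dist_commute power_mono)
    also have "\<dots> \<le> (Jung DIM('a))\<^sup>2 + 3 * \<eta>"
      using Jung_nonneg Jung_le_1 \<eta> by (rule add_sq_le)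
    finally show ?thesis using zero_le_power2[of "norm (c - g)"] by linarith
  qed
  have "\<bar>s k\<bar> \<le> 3 * real n * \<eta>" if "k < n" for k
  proof -
    have "s k \<le> real (n - 1) * (3 * \<eta>)"
      using summand_le_sum_plus[where a = s and b = "3 * \<eta>", OF that s_ge] \<open>(\<Sum>k<n. s k) = 0\<close> by simp
    also have "\<dots> \<le> real n * (3 * \<eta>)"
      using \<eta> by (intro mult_right_mono) auto
    finally have "s k \<le> real n * (3 * \<eta>)" .
    moreover have "1 * (3 * \<eta>) \<le> real n * (3 * \<eta>)"
      using that \<eta> by (intro mult_right_mono) auto
    ultimately show ?thesis using s_ge[OF that] unfolding abs_le_iff by linarith
  qed
  have "dist c g = norm (\<Sum>k<n. s k *\<^sub>R (y k - g))"
    using centred_expansion[OF reg[unfolded n_def], of "c - g"]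
    by (simp add: dist_norm s_def g_def n_def)
  also have "\<dots> \<le> (\<Sum>k<n. \<bar>s k\<bar>)"
    using norm_centred_vertex_le_1[OF reg] by (intro norm_sum_scaleR_le) (simp add: g_def n_def)
  also have "\<dots> \<le> (\<Sum>k<n. 3 * real n * \<eta>)"
    using \<open>\<And>k. k < n \<Longrightarrow> \<bar>s k\<bar> \<le> 3 * real n * \<eta>\<close> by (intro sum_mono) auto
  finally show ?thesis by (simp add: g_def power2_eq_square)
qed

lemma sum_sq_dist_le:
  fixes W :: "'a::real_inner set"
  assumes "finite W"
  shows "(\<Sum>w\<in>W. \<Sum>w'\<in>W. (dist w w')\<^sup>2) \<le> 2 * real (card W) * (\<Sum>w\<in>W. (dist w g)\<^sup>2)"
proof -
  define N where "N w = (dist w g)\<^sup>2" for w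
  have "(dist w w')\<^sup>2 = N w + N w' - 2 * inner (w - g) (w' - g)" for w w'
  proof -
    have "w - w' = (w - g) - (w' - g)" by simp
    thus ?thesis by (simp only: N_def dist_norm power2_norm_diff)
  qed
  hence "(\<Sum>w\<in>W. \<Sum>w'\<in>W. (dist w w')\<^sup>2)
        = (\<Sum>w\<in>W. \<Sum>w'\<in>W. N w) + (\<Sum>w\<in>W. \<Sum>w'\<in>W. N w')
          - 2 * (\<Sum>w\<in>W. \<Sum>w'\<in>W. inner (w - g) (w' - g))"
    by (simp add: sum_subtractf sum.distrib sum_distrib_left)
  also have "(\<Sum>w\<in>W. \<Sum>w'\<in>W. inner (w - g) (w' - g)) = inner (\<Sum>w\<in>W. w - g) (\<Sum>w'\<in>W. w' - g)"
    unfolding inner_sum_left inner_sum_right by (rule sum.swap)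
  also have "(\<Sum>w\<in>W. \<Sum>w'\<in>W. N w) + (\<Sum>w\<in>W. \<Sum>w'\<in>W. N w') = 2 * real (card W) * (\<Sum>w\<in>W. N w)"
    by (simp flip: sum_distrib_left)
  finally show ?thesis
    using inner_ge_zero[of "\<Sum>w\<in>W. w - g"] by (simp add: N_def)
qed

lemma sq_dist_centre_ge:
  fixes W :: "'a::real_inner set"
  assumes "finite W" "w0 \<in> W"
    and sep: "\<And>w w'. w \<in> W \<Longrightarrow> w' \<in> W \<Longrightarrow> w \<noteq> w' \<Longrightarrow> 1 - \<eta> \<le> (dist w w')\<^sup>2"
    and ball: "\<And>w. w \<in> W \<Longrightarrow> (dist w g)\<^sup>2 \<le> r"
  shows "real (card W - 1) * ((1 - \<eta>) / 2 - r) \<le> (dist w0 g)\<^sup>2"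
proof -
  define n where "n = card W"
  have "n \<ge> 1" using assms(1,2) by (simp add: n_def Suc_le_eq card_gt_0_iff) blast
  have "real n * (real (n - 1) * (1 - \<eta>)) = (\<Sum>w\<in>W. \<Sum>w'\<in>W - {w}. 1 - \<eta>)"
    using assms(1) by (simp add: n_def)
  also have "\<dots> \<le> (\<Sum>w\<in>W. \<Sum>w'\<in>W - {w}. (dist w w')\<^sup>2)"
    using sep by (intro sum_mono) auto
  also have "\<dots> = (\<Sum>w\<in>W. \<Sum>w'\<in>W. (dist w w')\<^sup>2)"
    using assms(1) by (intro sum.cong[OF refl]) (simp add: sum_diff1)
  also have "\<dots> \<le> real n * (2 * (\<Sum>w\<in>W. (dist w g)\<^sup>2))"
    using sum_sq_dist_le[OF assms(1), of g] by (simp add: n_def)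
  finally have "real (n - 1) * (1 - \<eta>) / 2 \<le> (\<Sum>w\<in>W. (dist w g)\<^sup>2)"
    using \<open>n \<ge> 1\<close> by simp
  also have "\<dots> = (dist w0 g)\<^sup>2 + (\<Sum>w\<in>W - {w0}. (dist w g)\<^sup>2)"
    using assms(1,2) by (simp add: sum.remove)
  also have "(\<Sum>w\<in>W - {w0}. (dist w g)\<^sup>2) \<le> (\<Sum>w\<in>W - {w0}. r)"
    using ball by (intro sum_mono) auto
  also have "\<dots> = real (n - 1) * r"
    using assms(1,2) by (simp add: n_def)
  finally show ?thesis by (simp add: n_def algebra_simps)
qed

text \<open>Each \<open>(a k)\<^sup>2\<close> lies below the chord through \<open>(-\<epsilon>)\<^sup>2\<close> and \<open>(a K)\<^sup>2\<close>, where \<open>a K\<close>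
  is the largest coordinate.\<close>
lemma max_coordinate_ge:
  fixes a :: "nat \<Rightarrow> real"
  assumes sum_a: "(\<Sum>k<n. a k) = 1" and a_ge: "\<And>k. k < n \<Longrightarrow> - \<epsilon> \<le> a k"
    and sq: "1 - \<delta> \<le> (\<Sum>k<n. (a k)\<^sup>2)" and \<epsilon>: "0 \<le> \<epsilon>" "real n * \<epsilon> \<le> 1"
    and K: "K < n" and max: "\<And>k. k < n \<Longrightarrow> a k \<le> a K"
  shows "1 - \<delta> - 2 * real n * \<epsilon> \<le> a K"
proof -
  have "(a k)\<^sup>2 \<le> (a K - \<epsilon>) * a k + \<epsilon> * a K" if "k < n" for k
  proof -
    have "0 \<le> (a k + \<epsilon>) * (a K - a k)"
      using a_ge[OF that] max[OF that] by simp
    thus ?thesis by (simp add: power2_eq_square algebra_simps)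
  qed
  hence "1 - \<delta> \<le> (\<Sum>k<n. (a K - \<epsilon>) * a k + \<epsilon> * a K)"
    using sq sum_mono[of "{..<n}" "\<lambda>k. (a k)\<^sup>2"] by (meson lessThan_iff order_trans)
  also have "\<dots> = (a K - \<epsilon>) + real n * \<epsilon> * a K"
    using sum_a by (simp add: sum.distrib flip: sum_distrib_left)
  also have "real n * \<epsilon> * a K \<le> real n * \<epsilon> * (1 + real n * \<epsilon>)"
  proof (rule mult_left_mono)
    have "a K \<le> 1 + real (n - 1) * \<epsilon>"
      using summand_le_sum_plus[where a = a, OF K a_ge] sum_a by simp
    also have "\<dots> \<le> 1 + real n * \<epsilon>"
      using \<epsilon> by (simp add: mult_right_mono)
    finally show "a K \<le> 1 + real n * \<epsilon>" .
  qed (use \<epsilon> in simp)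
  also have "\<dots> \<le> 2 * (real n * \<epsilon>)"
    using \<epsilon> mult_left_mono[OF \<epsilon>(2), of "real n * \<epsilon>"] by (simp add: algebra_simps)
  finally show ?thesis
    using \<epsilon> by simp
qed

lemma near_unit_vector:
  fixes a :: "nat \<Rightarrow> real"
  assumes sum_a: "(\<Sum>k<n. a k) = 1" and a_ge: "\<And>k. k < n \<Longrightarrow> - \<epsilon> \<le> a k"
    and sq: "1 - \<delta> \<le> (\<Sum>k<n. (a k)\<^sup>2)"
    and \<epsilon>: "0 \<le> \<epsilon>" "real n * \<epsilon> \<le> 1" and "0 \<le> \<delta>" and "n \<ge> 1"
  shows "\<exists>K<n. (\<Sum>k<n. \<bar>a k - (if k = K then 1 else 0)\<bar>) \<le> 2 * \<delta> + 6 * real n * \<epsilon>"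
proof -
  have "Max (a ` {..<n}) \<in> a ` {..<n}"
    using \<open>n \<ge> 1\<close> by (intro Max_in) (auto simp: lessThan_empty_iff)
  then obtain K where K: "K < n" and "a K = Max (a ` {..<n})"
    by auto
  hence "a k \<le> a K" if "k < n" for k
    using that by (auto intro!: Max_ge)
  note top = max_coordinate_ge[OF sum_a a_ge sq \<epsilon> K this]
  define v where "v k = a k - (if k = K then 1 else 0)" for k
  have "max (- v k) 0 \<le> (if k = K then \<delta> + 2 * real n * \<epsilon> else \<epsilon>)" if "k < n" for k
    using top a_ge[OF that] \<epsilon> \<open>0 \<le> \<delta>\<close> by (auto simp: v_def)
  hence neg_part: "(\<Sum>k<n. max (- v k) 0) \<le> (\<Sum>k<n. if k = K then \<delta> + 2 * real n * \<epsilon> else \<epsilon>)"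
    by (intro sum_mono) auto
  have "\<bar>v k\<bar> = v k + 2 * max (- v k) 0" for k
    by (simp add: abs_if max_def)
  hence "(\<Sum>k<n. \<bar>v k\<bar>) = (\<Sum>k<n. v k) + 2 * (\<Sum>k<n. max (- v k) 0)"
    by (simp add: sum.distrib sum_distrib_left)
  also have "(\<Sum>k<n. v k) = 0"
    using sum_a K by (simp add: v_def sum_subtractf)
  also note neg_part
  also have "(\<Sum>k<n. if k = K then \<delta> + 2 * real n * \<epsilon> else \<epsilon>) = \<delta> + 2 * real n * \<epsilon> + real (n - 1) * \<epsilon>"
    using K by (simp add: sum.If_cases Diff_eq[symmetric] card_Diff_singleton)
  also have "real (n - 1) * \<epsilon> \<le> real n * \<epsilon>"
    using \<epsilon> by (simp add: mult_right_mono)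
  finally show ?thesis using K by (auto simp: v_def algebra_simps)
qed

lemma barycentric_coordinates:
  fixes y :: "nat \<Rightarrow> 'a::euclidean_space" and z :: 'a
  defines "n \<equiv> Suc DIM('a)"
  defines "g \<equiv> centroid y n"
  defines "a \<equiv> \<lambda>k. 1 / real n + 2 * inner (z - g) (y k - g)"
  assumes reg: "regular_simplex y n"
  shows "(\<Sum>k<n. a k) = 1"
    and "(\<Sum>k<n. a k *\<^sub>R (y k - g)) = z - g"
    and "(\<Sum>k<n. (a k)\<^sup>2) = 1 / real n + 2 * (dist z g)\<^sup>2"
    and "\<And>k. k < n \<Longrightarrow> a k = 1 - (Jung DIM('a))\<^sup>2 + (dist z g)\<^sup>2 - (dist z (y k))\<^sup>2"
proof -
  define s where "s k = 2 * inner (z - g) (y k - g)" for k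
  have "n \<ge> 1" by (simp add: n_def)
  have sum_s: "(\<Sum>k<n. s k) = 0"
    using sum_inner_diff_centroid[OF \<open>n \<ge> 1\<close>, of "z - g" y]
    by (simp add: s_def g_def flip: sum_distrib_left)
  have expansion: "z - g = (\<Sum>k<n. s k *\<^sub>R (y k - g))"
    using centred_expansion[OF reg[unfolded n_def], of "z - g"] by (simp add: s_def g_def n_def)
  show "(\<Sum>k<n. a k) = 1"
    using sum_s by (simp add: a_def s_def[symmetric] sum.distrib n_def)
  have "(\<Sum>k<n. (1 / real n) *\<^sub>R (y k - g)) = 0"
    using sum_diff_centroid[OF \<open>n \<ge> 1\<close>, of y] by (simp add: g_def flip: scaleR_sum_right)
  thus "(\<Sum>k<n. a k *\<^sub>R (y k - g)) = z - g"
    by (simp add: a_def s_def[symmetric] scaleR_add_left sum.distrib flip: expansion)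
  have "(dist z g)\<^sup>2 = inner (z - g) (\<Sum>k<n. s k *\<^sub>R (y k - g))"
    by (simp add: dist_norm power2_norm_eq_inner flip: expansion)
  also have "\<dots> = (\<Sum>k<n. (s k)\<^sup>2) / 2"
    by (simp add: inner_sum_right s_def power2_eq_square sum_divide_distrib mult_ac)
  finally have "(\<Sum>k<n. (s k)\<^sup>2) = 2 * (dist z g)\<^sup>2" by simp
  moreover have "(\<Sum>k<n. (a k)\<^sup>2) = real n * (1 / real n)\<^sup>2 + 2 / real n * (\<Sum>k<n. s k) + (\<Sum>k<n. (s k)\<^sup>2)"
    by (simp add: a_def s_def[symmetric] power2_sum sum.distrib sum_distrib_left mult.assoc)
  ultimately show "(\<Sum>k<n. (a k)\<^sup>2) = 1 / real n + 2 * (dist z g)\<^sup>2"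
    using sum_s by (simp add: power2_eq_square n_def)
  show "a k = 1 - (Jung DIM('a))\<^sup>2 + (dist z g)\<^sup>2 - (dist z (y k))\<^sup>2" if "k < n" for k
  proof -
    have "1 / real n = 1 - 2 * (Jung DIM('a))\<^sup>2"
      by (simp add: Jung_sq_double n_def field_simps)
    thus ?thesis
      using sq_dist_vertex_Jung[OF reg[unfolded n_def] that[unfolded n_def], of z]
      by (simp add: a_def g_def n_def dist_norm)
  qed
qed

lemma close_to_vertex:
  fixes y :: "nat \<Rightarrow> 'a::euclidean_space"
  defines "n \<equiv> Suc DIM('a)"
  assumes reg: "regular_simplex y n"
    and far: "(Jung DIM('a))\<^sup>2 - \<alpha> * \<eta> \<le> (dist z (centroid y n))\<^sup>2"
    and near: "\<And>k. k < n \<Longrightarrow> (dist z (y k))\<^sup>2 \<le> 1 + 3 * \<eta>"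
    and "0 \<le> \<alpha>" "0 \<le> \<eta>" and small: "real n * ((\<alpha> + 3) * \<eta>) \<le> 1"
  shows "\<exists>K<n. dist z (y K) \<le> (4 * \<alpha> + 6 * real n * (\<alpha> + 3)) * \<eta>"
proof -
  define g where "g = centroid y n"
  define a where "a k = 1 / real n + 2 * inner (z - g) (y k - g)" for k
  note bary = barycentric_coordinates[where z = z, OF reg[unfolded n_def]]
  have sum_a: "(\<Sum>k<n. a k) = 1"
    using bary(1) by (simp add: a_def g_def n_def)
  have a_ge: "- ((\<alpha> + 3) * \<eta>) \<le> a k" if "k < n" for k
    using bary(4)[OF that[unfolded n_def]] far near[OF that] by (simp add: a_def g_def n_def algebra_simps)
  have sq_ge: "1 - 2 * \<alpha> * \<eta> \<le> (\<Sum>k<n. (a k)\<^sup>2)"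
  proof -
    have "1 / real n = 1 - 2 * (Jung DIM('a))\<^sup>2"
      by (simp add: Jung_sq_double n_def field_simps)
    thus ?thesis using bary(3) far by (simp add: a_def g_def n_def)
  qed
  have "0 \<le> (\<alpha> + 3) * \<eta>" "0 \<le> 2 * \<alpha> * \<eta>" "n \<ge> 1"
    using assms(5,6) by (simp_all add: n_def)
  then obtain K where "K < n" and
    K: "(\<Sum>k<n. \<bar>a k - (if k = K then 1 else 0)\<bar>) \<le> 2 * (2 * \<alpha> * \<eta>) + 6 * real n * ((\<alpha> + 3) * \<eta>)"
    using near_unit_vector[OF sum_a a_ge sq_ge _ small] by blast
  have "z - y K = (\<Sum>k<n. a k *\<^sub>R (y k - g)) - (\<Sum>k<n. (if k = K then 1 else 0) *\<^sub>R (y k - g))"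
    using bary(2) \<open>K < n\<close> by (simp add: a_def g_def n_def if_distrib[of "\<lambda>c. c *\<^sub>R _"] cong: if_cong)
  also have "\<dots> = (\<Sum>k<n. (a k - (if k = K then 1 else 0)) *\<^sub>R (y k - g))"
    by (simp add: scaleR_diff_left sum_subtractf)
  finally have "dist z (y K) = norm (\<Sum>k<n. (a k - (if k = K then 1 else 0)) *\<^sub>R (y k - g))"
    by (simp add: dist_norm)
  also have "\<dots> \<le> (\<Sum>k<n. \<bar>a k - (if k = K then 1 else 0)\<bar>)"
    using norm_centred_vertex_le_1[OF reg] by (intro norm_sum_scaleR_le) (simp add: g_def n_def)
  also have "\<dots> \<le> (4 * \<alpha> + 6 * real n * (\<alpha> + 3)) * \<eta>"
    using K by (simp add: algebra_simps)
  finally show ?thesis using \<open>K < n\<close> by blast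
qed

lemma separated_points_near_vertices:
  fixes y :: "nat \<Rightarrow> 'a::euclidean_space" and W :: "'a set"
  defines "n \<equiv> Suc DIM('a)" and "\<alpha> \<equiv> 7 * real DIM('a) / 2"
  assumes reg: "regular_simplex y n" and W: "finite W" "card W = n" "w \<in> W"
    and ball: "\<And>w. w \<in> W \<Longrightarrow> dist w (centroid y n) \<le> Jung DIM('a) + \<eta>"
    and near: "\<And>w k. w \<in> W \<Longrightarrow> k < n \<Longrightarrow> dist w (y k) \<le> 1 + \<eta>"
    and sep: "\<And>w w'. w \<in> W \<Longrightarrow> w' \<in> W \<Longrightarrow> w \<noteq> w' \<Longrightarrow> 1 - \<eta> \<le> (dist w w')\<^sup>2"
    and "0 \<le> \<eta>" and small: "real n * ((\<alpha> + 3) * \<eta>) \<le> 1"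
  shows "\<exists>k<n. dist w (y k) \<le> (4 * \<alpha> + 6 * real n * (\<alpha> + 3)) * \<eta>"
proof (rule close_to_vertex[OF reg[unfolded n_def], folded n_def])
  define J where "J = Jung DIM('a)"
  have "1 * (1 * \<eta>) \<le> real n * ((\<alpha> + 3) * \<eta>)"
    using \<open>0 \<le> \<eta>\<close> by (intro mult_mono) (simp_all add: n_def \<alpha>_def)
  hence "\<eta> \<le> 1" using small by simp
  have ball_sq: "(dist w' (centroid y n))\<^sup>2 \<le> J\<^sup>2 + 3 * \<eta>" if "w' \<in> W" for w'
  proof -
    have "(dist w' (centroid y n))\<^sup>2 \<le> (J + \<eta>)\<^sup>2"
      using ball[OF that] by (simp add: J_def power_mono)
    also have "\<dots> \<le> J\<^sup>2 + 3 * \<eta>"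
      using Jung_nonneg Jung_le_1 \<open>0 \<le> \<eta>\<close> \<open>\<eta> \<le> 1\<close> unfolding J_def by (rule add_sq_le)
    finally show ?thesis .
  qed
  have circumradius: "real DIM('a) / 2 - real DIM('a) * J\<^sup>2 = J\<^sup>2"
    by (simp add: J_def Jung_sq field_simps)
  have "real (card W - 1) * ((1 - \<eta>) / 2 - (J\<^sup>2 + 3 * \<eta>))
        = (real DIM('a) / 2 - real DIM('a) * J\<^sup>2) - \<alpha> * \<eta>"
    by (simp add: W(2) n_def \<alpha>_def field_simps)
  also have "\<dots> = J\<^sup>2 - \<alpha> * \<eta>"
    unfolding circumradius ..
  finally show "(Jung DIM('a))\<^sup>2 - \<alpha> * \<eta> \<le> (dist w (centroid y n))\<^sup>2"
    using sq_dist_centre_ge[OF W(1,3) sep ball_sq] by (simp add: J_def)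
  show "(dist w (y k))\<^sup>2 \<le> 1 + 3 * \<eta>" if "k < n" for k
  proof -
    have "(dist w (y k))\<^sup>2 \<le> (1 + \<eta>)\<^sup>2"
      using near[OF W(3) that] by (simp add: power_mono)
    also have "\<dots> \<le> 1\<^sup>2 + 3 * \<eta>"
      using \<open>0 \<le> \<eta>\<close> \<open>\<eta> \<le> 1\<close> by (intro add_sq_le) auto
    finally show ?thesis by simp
  qed
qed (use assms in \<open>simp_all add: \<alpha>_def\<close>)

section \<open>The Chebyshev centre\<close>

lemma farthest_point_exists:
  fixes S :: "'a::metric_space set"
  assumes "compact S" "S \<noteq> {}"
  obtains y where "y \<in> S" "(SUP x\<in>S. dist c x) = dist c y" "\<And>x. x \<in> S \<Longrightarrow> dist c x \<le> dist c y"
proof -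
  have "continuous_on S (dist c)"
    by (intro continuous_intros)
  then obtain y where "y \<in> S" "\<forall>x\<in>S. dist c x \<le> dist c y"
    using continuous_attains_sup[OF assms] by auto
  moreover from this have "(SUP x\<in>S. dist c x) = dist c y"
    by (intro cSup_eq_maximum) auto
  ultimately show ?thesis using that by blast
qed

lemma chebyshev_centre_exists:
  fixes S :: "'a::euclidean_space set"
  assumes S: "compact S" "S \<noteq> {}"
  obtains c where "\<And>c'. (SUP x\<in>S. dist c x) \<le> (SUP x\<in>S. dist c' x)"
proof -
  define f where "f c = (SUP x\<in>S. dist c x)" for c :: 'a
  have f_ge: "dist c x \<le> f c" if "x \<in> S" for c x
    using farthest_point_exists[OF S, of c] that unfolding f_def by metis
  have tri: "f c \<le> f c' + dist c c'" for c c'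
  proof -
    obtain y where "y \<in> S" "f c = dist c y"
      using farthest_point_exists[OF S, of c] unfolding f_def by metis
    thus ?thesis using f_ge[of y c'] dist_triangle[of c y c'] by (simp add: dist_commute)
  qed
  have "dist (f c) (f c') \<le> 1 * dist c c'" for c c'
    using tri[of c c'] tri[of c' c] by (simp add: dist_real_def dist_commute abs_le_iff)
  hence "1-lipschitz_on UNIV f"
    by (intro lipschitz_onI) simp_all
  hence cont: "continuous_on UNIV f" by (rule lipschitz_on_continuous_on)
  obtain x0 where x0: "x0 \<in> S" using S by auto
  have "cball x0 (f x0) \<noteq> {}" using f_ge[OF x0, of x0] by auto
  then obtain c where c: "c \<in> cball x0 (f x0)" "\<And>c'. c' \<in> cball x0 (f x0) \<Longrightarrow> f c \<le> f c'"
    using continuous_attains_inf[OF compact_cball _ continuous_on_subset[OF cont]] by blast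
  have "f c \<le> f c'" for c'
  proof (cases "c' \<in> cball x0 (f x0)")
    case False
    hence "f c \<le> f x0" "f x0 < dist x0 c'" using c(2)[of x0] f_ge[OF x0, of x0] by auto
    thus ?thesis using f_ge[OF x0, of c'] by (simp add: dist_commute)
  qed (use c in auto)
  thus ?thesis using that by (auto simp: f_def)
qed

lemma dist_shift_less:
  fixes c u x :: "'a::real_inner"
  assumes "dist x c \<le> R" "t * (norm u)\<^sup>2 < 2 * inner u (x - c)" "t > 0"
  shows "dist (c + t *\<^sub>R u) x < R"
proof -
  have "c + t *\<^sub>R u - x = t *\<^sub>R u - (x - c)" by simp
  hence "(dist (c + t *\<^sub>R u) x)\<^sup>2 = (norm (t *\<^sub>R u - (x - c)))\<^sup>2"
    by (simp only: dist_norm)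
  also have "\<dots> = t\<^sup>2 * (norm u)\<^sup>2 - 2 * t * inner u (x - c) + (norm (x - c))\<^sup>2"
    by (simp add: power2_norm_diff power_mult_distrib)
  also have "\<dots> = (dist x c)\<^sup>2 - t * (2 * inner u (x - c) - t * (norm u)\<^sup>2)"
    by (simp add: dist_norm power2_eq_square algebra_simps)
  also have "\<dots> < (dist x c)\<^sup>2" using assms(2,3) by simp
  also have "\<dots> \<le> R\<^sup>2" using assms(1) by (simp add: power_mono)
  finally have "(dist (c + t *\<^sub>R u) x)\<^sup>2 < R\<^sup>2" .
  moreover have "0 \<le> R" using assms(1) zero_le_dist[of x c] by linarith
  ultimately show ?thesis by (rule power_less_imp_less_base)
qed

lemma shift_centre_closer:
  fixes S :: "'a::real_inner set"
  assumes in_ball: "\<And>x. x \<in> S \<Longrightarrow> dist x c \<le> R"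
    and inner_ball: "\<And>x. x \<in> S \<Longrightarrow> inner u (x - c) \<le> d / 2 \<Longrightarrow> dist x c \<le> R2"
    and "R2 < R" "0 < d" "u \<noteq> 0"
  obtains t where "t > 0" "\<And>x. x \<in> S \<Longrightarrow> dist (c + t *\<^sub>R u) x < R"
proof
  define t where "t = min ((R - R2) / (2 * norm u)) (d / (norm u)\<^sup>2)"
  show "t > 0" using assms(3-5) by (simp add: t_def)
  show "dist (c + t *\<^sub>R u) x < R" if "x \<in> S" for x
  proof (cases "inner u (x - c) \<le> d / 2")
    case True
    have "t * norm u \<le> (R - R2) / (2 * norm u) * norm u"
      by (intro mult_right_mono) (simp_all add: t_def)
    also have "\<dots> = (R - R2) / 2"
      using \<open>u \<noteq> 0\<close> by simp
    finally have "t * norm u \<le> (R - R2) / 2" .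
    moreover have "dist (c + t *\<^sub>R u) x \<le> dist x c + t * norm u"
      using dist_triangle[of "c + t *\<^sub>R u" x c] \<open>t > 0\<close>
      by (simp add: dist_norm norm_minus_commute add.commute)
    ultimately show ?thesis using inner_ball[OF that True] \<open>R2 < R\<close> by argo
  next
    case False
    have "t * (norm u)\<^sup>2 \<le> d / (norm u)\<^sup>2 * (norm u)\<^sup>2"
      by (intro mult_right_mono) (simp_all add: t_def)
    also have "\<dots> = d"
      using \<open>u \<noteq> 0\<close> by simp
    also have "d < 2 * inner u (x - c)"
      using False by simp
    finally show ?thesis by (rule dist_shift_less[OF in_ball[OF that] _ \<open>t > 0\<close>])
  qed
qed

lemma compact_sup_dist_less:
  fixes K :: "'a::metric_space set"
  assumes "compact K" "\<And>x. x \<in> K \<Longrightarrow> dist x c < R"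
  obtains R2 where "R2 < R" "\<And>x. x \<in> K \<Longrightarrow> dist x c \<le> R2"
proof (cases "K = {}")
  case False
  have "continuous_on K (\<lambda>x. dist x c)"
    by (intro continuous_intros)
  then obtain m where "m \<in> K" "\<And>x. x \<in> K \<Longrightarrow> dist x c \<le> dist m c"
    using continuous_attains_sup[OF assms(1) False] by blast
  thus ?thesis using that assms(2) by blast
qed (use that[of "R - 1"] in auto)

text \<open>Otherwise a hyperplane separates the centre from the farthest points, and moving the
  centre slightly towards them decreases the radius.\<close>
lemma chebyshev_centre_in_hull:
  fixes S :: "'a::euclidean_space set"
  assumes S: "compact S" "S \<noteq> {}"
    and min: "\<And>c'. (SUP x\<in>S. dist c x) \<le> (SUP x\<in>S. dist c' x)"
  defines "R \<equiv> SUP x\<in>S. dist c x"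
  shows "c \<in> convex hull {x\<in>S. dist x c = R}"
proof (rule ccontr)
  define A where "A = {x\<in>S. dist x c = R}"
  assume "c \<notin> convex hull {x\<in>S. dist x c = R}"
  hence "c \<notin> convex hull A" by (simp add: A_def)
  obtain y0 where "y0 \<in> S" "R = dist c y0" and in_ball: "\<And>x. x \<in> S \<Longrightarrow> dist x c \<le> R"
    using farthest_point_exists[OF S, of c] unfolding R_def by (metis dist_commute)
  hence "y0 \<in> A" by (simp add: A_def dist_commute)
  have "A = S \<inter> sphere c R"
    by (auto simp: A_def dist_commute)
  hence "compact A" using compact_Int_closed[OF S(1) closed_sphere] by simp
  then obtain u b where ub: "inner u c < b" "\<And>x. x \<in> convex hull A \<Longrightarrow> b < inner u x"
    using separating_hyperplane_closed_point[OF convex_convex_hull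
            compact_imp_closed[OF compact_convex_hull] \<open>c \<notin> convex hull A\<close>] by blast
  define d where "d = b - inner u c"
  have "d > 0" using ub(1) by (simp add: d_def)
  have sep: "d < inner u (x - c)" if "x \<in> A" for x
    using ub(2)[of x] hull_subset[of A convex] that by (auto simp: d_def inner_diff_right)
  have "u \<noteq> 0" using sep[OF \<open>y0 \<in> A\<close>] \<open>d > 0\<close> by auto
  define S2 where "S2 = S \<inter> {x. inner u x \<le> d / 2 + inner u c}"
  have "compact S2"
    unfolding S2_def using S(1) closed_halfspace_le by (rule compact_Int_closed)
  moreover have "dist x c < R" if "x \<in> S2" for x
    using in_ball[of x] sep[of x] that \<open>d > 0\<close> by (force simp: S2_def A_def inner_diff_right)
  ultimately obtain R2 where "R2 < R" and R2: "\<And>x. x \<in> S2 \<Longrightarrow> dist x c \<le> R2"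
    using compact_sup_dist_less by metis
  have inner_ball: "dist x c \<le> R2" if "x \<in> S" "inner u (x - c) \<le> d / 2" for x
    using R2[of x] that by (simp add: S2_def inner_diff_right algebra_simps)
  obtain t where closer: "\<And>x. x \<in> S \<Longrightarrow> dist (c + t *\<^sub>R u) x < R"
    using shift_centre_closer[OF in_ball inner_ball \<open>R2 < R\<close> \<open>d > 0\<close> \<open>u \<noteq> 0\<close>] by metis
  obtain y where "y \<in> S" "(SUP x\<in>S. dist (c + t *\<^sub>R u) x) = dist (c + t *\<^sub>R u) y"
    using farthest_point_exists[OF S] by metis
  thus False using closer[of y] min[of "c + t *\<^sub>R u"] by (simp add: R_def)
qed

lemma chebyshev_support:
  fixes S :: "'a::euclidean_space set"
  assumes S: "compact S" "S \<noteq> {}"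
  obtains R c T l where "cheb_rad S \<le> R" "\<And>x. x \<in> S \<Longrightarrow> dist x c \<le> R"
    "finite T" "T \<subseteq> S" "card T \<le> DIM('a) + 1" "\<And>t. t \<in> T \<Longrightarrow> dist t c = R"
    "\<And>t. t \<in> T \<Longrightarrow> 0 \<le> l t" "sum l T = 1" "(\<Sum>t\<in>T. l t *\<^sub>R t) = c"
proof -
  obtain c where min: "\<And>c'. (SUP x\<in>S. dist c x) \<le> (SUP x\<in>S. dist c' x)"
    using chebyshev_centre_exists[OF S] by blast
  define R where "R = (SUP x\<in>S. dist c x)"
  have "0 \<le> (SUP x\<in>S. dist c' x)" for c'
    using farthest_point_exists[OF S, of c'] by (metis zero_le_dist)
  hence "cheb_rad S \<le> R"
    unfolding cheb_rad_def R_def by (intro cINF_lower bdd_belowI2) auto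
  moreover have "dist x c \<le> R" if "x \<in> S" for x
    using farthest_point_exists[OF S, of c] that by (metis R_def dist_commute)
  moreover obtain T where "finite T" "T \<subseteq> {x\<in>S. dist x c = R}" "card T \<le> DIM('a) + 1"
    "c \<in> convex hull T"
    using caratheodory[of "{x\<in>S. dist x c = R}"] chebyshev_centre_in_hull[OF S min]
    by (auto simp: R_def)
  moreover from this obtain l where "\<forall>t\<in>T. 0 \<le> l t" "sum l T = 1" "(\<Sum>t\<in>T. l t *\<^sub>R t) = c"
    using convex_hull_finite by blast
  ultimately show ?thesis using that[of R c T l] by blast
qed

section \<open>Jung's inequality with slack\<close>

lemma weighted_sum_sq_dist:
  fixes T :: "'a::real_inner set"
  assumes "finite T" "sum l T = 1" "(\<Sum>t\<in>T. l t *\<^sub>R t) = c" "\<And>t. t \<in> T \<Longrightarrow> dist t c = R"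
  shows "(\<Sum>t\<in>T. \<Sum>t'\<in>T. l t * l t' * (dist t t')\<^sup>2) = 2 * R\<^sup>2"
proof -
  have centred: "(\<Sum>t\<in>T. l t *\<^sub>R (t - c)) = 0"
    using assms(2,3) by (simp add: scaleR_diff_right sum_subtractf flip: scaleR_left.sum)
  have pointwise: "l t * l t' * (dist t t')\<^sup>2 =
      l t * l t' * (2 * R\<^sup>2) - 2 * inner (l t *\<^sub>R (t - c)) (l t' *\<^sub>R (t' - c))"
    if "t \<in> T" "t' \<in> T" for t t'
  proof -
    have "(dist t t')\<^sup>2 = 2 * R\<^sup>2 - 2 * inner (t - c) (t' - c)"
      using power2_norm_diff[of "t - c" "t' - c"] assms(4) that by (simp add: dist_norm)
    thus ?thesis by (simp add: right_diff_distrib mult_ac)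
  qed
  have "(\<Sum>t\<in>T. \<Sum>t'\<in>T. l t * l t' * (dist t t')\<^sup>2)
        = (\<Sum>t\<in>T. \<Sum>t'\<in>T. l t * l t' * (2 * R\<^sup>2) - 2 * inner (l t *\<^sub>R (t - c)) (l t' *\<^sub>R (t' - c)))"
    using pointwise by (intro sum.cong refl) simp
  also have "\<dots> = (\<Sum>t\<in>T. \<Sum>t'\<in>T. l t * l t' * (2 * R\<^sup>2))
                    - 2 * (\<Sum>t\<in>T. \<Sum>t'\<in>T. inner (l t *\<^sub>R (t - c)) (l t' *\<^sub>R (t' - c)))"
    by (simp add: sum_subtractf sum_distrib_left)
  also have "(\<Sum>t\<in>T. \<Sum>t'\<in>T. inner (l t *\<^sub>R (t - c)) (l t' *\<^sub>R (t' - c))) =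
      inner (\<Sum>t\<in>T. l t *\<^sub>R (t - c)) (\<Sum>t'\<in>T. l t' *\<^sub>R (t' - c))"
    unfolding inner_sum_left inner_sum_right by (rule sum.swap)
  also have "\<dots> = 0"
    using centred by simp
  also have "(\<Sum>t\<in>T. \<Sum>t'\<in>T. l t * l t' * (2 * R\<^sup>2)) = 2 * R\<^sup>2"
    using assms(2) by (simp flip: sum_distrib_left sum_distrib_right)
  finally show ?thesis by simp
qed

text \<open>The classical proof of Jung's theorem, keeping track of the slack: if all distances are
  at most \<open>D\<close>, then \<open>2 R\<^sup>2 \<le> D\<^sup>2 (1 - \<Sum> l\<^sup>2)\<close>, and each pair of points contributes
  \<open>l t l t' (D\<^sup>2 - |t - t'|\<^sup>2)\<close> to the difference.\<close>
lemma weighted_diameter_slack: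
  fixes T :: "'a::real_inner set"
  assumes "finite T" "\<And>t. t \<in> T \<Longrightarrow> 0 \<le> l t" "sum l T = 1" "(\<Sum>t\<in>T. l t *\<^sub>R t) = c"
    "\<And>t. t \<in> T \<Longrightarrow> dist t c = R" "\<And>t t'. t \<in> T \<Longrightarrow> t' \<in> T \<Longrightarrow> dist t t' \<le> D"
  defines "slack \<equiv> D\<^sup>2 * (1 - (\<Sum>t\<in>T. (l t)\<^sup>2)) - 2 * R\<^sup>2"
  shows "0 \<le> slack"
    and "\<And>t t'. t \<in> T \<Longrightarrow> t' \<in> T \<Longrightarrow> t \<noteq> t' \<Longrightarrow> l t * l t' * (D\<^sup>2 - (dist t t')\<^sup>2) \<le> slack"
proof -
  define g where "g t t' = (if t = t' then 0 else l t * l t' * (D\<^sup>2 - (dist t t')\<^sup>2))" for t t'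
  have g_nonneg: "0 \<le> g t t'" if "t \<in> T" "t' \<in> T" for t t'
  proof -
    have "(dist t t')\<^sup>2 \<le> D\<^sup>2" using assms(6)[OF that] by (simp add: power_mono)
    thus ?thesis using assms(2) that by (simp add: g_def)
  qed
  have "g t t' = l t * l t' * D\<^sup>2 - l t * l t' * (dist t t')\<^sup>2 - (if t = t' then (l t)\<^sup>2 * D\<^sup>2 else 0)"
    for t t'
    by (simp add: g_def power2_eq_square algebra_simps)
  hence "(\<Sum>t\<in>T. \<Sum>t'\<in>T. g t t') =
           (\<Sum>t\<in>T. \<Sum>t'\<in>T. l t * l t' * D\<^sup>2) - (\<Sum>t\<in>T. \<Sum>t'\<in>T. l t * l t' * (dist t t')\<^sup>2)
           - (\<Sum>t\<in>T. (l t)\<^sup>2 * D\<^sup>2)"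
    using assms(1) by (simp add: sum_subtractf sum.delta)
  also have "(\<Sum>t\<in>T. \<Sum>t'\<in>T. l t * l t' * D\<^sup>2) = D\<^sup>2"
    using assms(3) by (simp flip: sum_distrib_left sum_distrib_right)
  finally have sum_g: "(\<Sum>t\<in>T. \<Sum>t'\<in>T. g t t') = slack"
    using weighted_sum_sq_dist[OF assms(1,3,4,5)]
    by (simp add: slack_def algebra_simps sum_distrib_left)
  show "0 \<le> slack"
    unfolding sum_g[symmetric] using g_nonneg by (intro sum_nonneg) auto
  show "l t * l t' * (D\<^sup>2 - (dist t t')\<^sup>2) \<le> slack" if "t \<in> T" "t' \<in> T" "t \<noteq> t'" for t t'
  proof -
    have "g t t' \<le> (\<Sum>t''\<in>T. g t t'')"
      using that assms(1) g_nonneg by (intro member_le_sum) auto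
    also have "\<dots> \<le> (\<Sum>t\<in>T. \<Sum>t''\<in>T. g t t'')"
      using that assms(1) g_nonneg by (intro member_le_sum[of _ _ "\<lambda>t. \<Sum>t''\<in>T. g t t''"] sum_nonneg) auto
    finally have "g t t' \<le> slack" using sum_g by simp
    thus ?thesis using that by (simp add: g_def)
  qed
qed

lemma sum_sq_deviation:
  fixes l :: "'a \<Rightarrow> real"
  assumes "finite T" "T \<noteq> {}" "sum l T = 1"
  shows "(\<Sum>t\<in>T. (l t - 1 / real (card T))\<^sup>2) = (\<Sum>t\<in>T. (l t)\<^sup>2) - 1 / real (card T)"
proof -
  define n where "n = real (card T)"
  have "n > 0" using assms by (simp add: n_def card_gt_0_iff)
  have "(\<Sum>t\<in>T. (l t - 1 / n)\<^sup>2) = (\<Sum>t\<in>T. ((l t)\<^sup>2 + 1 / n\<^sup>2) - (2 / n) * l t)"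
    by (intro sum.cong refl) (simp add: power2_eq_square algebra_simps)
  also have "\<dots> = (\<Sum>t\<in>T. (l t)\<^sup>2) + n * (1 / n\<^sup>2) - (2 / n) * sum l T"
    by (simp add: sum_subtractf sum.distrib sum_distrib_left n_def)
  also have "\<dots> = (\<Sum>t\<in>T. (l t)\<^sup>2) - 1 / n"
    using assms(3) \<open>n > 0\<close> by (simp add: power2_eq_square field_simps)
  finally show ?thesis by (simp add: n_def)
qed

lemma card_contradiction_bound:
  fixes d e :: real
  assumes "d \<ge> 1" "0 \<le> e" "e \<le> 1 / (4 * (d + 1)\<^sup>2)"
  shows "(1 + e) * ((d - 1) / d) < d / (d + 1)"
proof -
  have "(1 + e) * ((d - 1) / d) \<le> (1 + 1 / (4 * (d + 1)\<^sup>2)) * ((d - 1) / d)"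
    using assms by (intro mult_right_mono) auto
  also have "\<dots> < d / (d + 1)"
  proof -
    have "d * d - 1 < 4 + (d * 8 + d * (d * 4))"
      using assms(1) zero_le_square[of d] by linarith
    moreover have "0 < 4 + (d * 8 + d * (d * 4))"
      using assms(1) by (simp add: add_pos_nonneg)
    ultimately have "(d * d - 1) / (4 + (d * 8 + d * (d * 4))) < 1"
      by simp
    thus ?thesis using assms(1) by (simp add: field_simps power2_eq_square)
  qed
  finally show ?thesis .
qed

locale jung_support =
  fixes T :: "'a::euclidean_space set" and l :: "'a \<Rightarrow> real" and c :: 'a and R \<beta> :: real
  assumes finite_support: "finite T"
    and card_support_le: "card T \<le> DIM('a) + 1"
    and weights_nonneg: "\<And>t. t \<in> T \<Longrightarrow> 0 \<le> l t"
    and weights_sum: "sum l T = 1"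
    and weighted_centre: "(\<Sum>t\<in>T. l t *\<^sub>R t) = c"
    and dist_centre: "\<And>t. t \<in> T \<Longrightarrow> dist t c = R"
    and Jung_le_radius: "Jung DIM('a) \<le> R"
    and dist_support_le: "\<And>t t'. t \<in> T \<Longrightarrow> t' \<in> T \<Longrightarrow> dist t t' \<le> 1 + \<beta>"
    and beta_nonneg: "0 \<le> \<beta>"
    and beta_small: "\<beta> \<le> 1 / (12 * (real DIM('a) + 1)\<^sup>2)"
begin

lemma excess_le: "(1 + \<beta>)\<^sup>2 - 1 \<le> 3 * \<beta>" "3 * \<beta> \<le> 1 / (4 * (real DIM('a) + 1)\<^sup>2)"
proof -
  have "1 \<le> (real DIM('a) + 1)\<^sup>2"
    by (simp add: one_le_power)
  hence "1 \<le> 12 * (real DIM('a) + 1)\<^sup>2"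
    by linarith
  hence "1 / (12 * (real DIM('a) + 1)\<^sup>2) \<le> 1"
    by simp
  hence "\<beta> \<le> 1"
    using beta_small by linarith
  hence "\<beta> * \<beta> \<le> \<beta> * 1"
    using beta_nonneg by (intro mult_left_mono)
  thus "(1 + \<beta>)\<^sup>2 - 1 \<le> 3 * \<beta>"
    by (simp add: power2_eq_square algebra_simps)
  show "3 * \<beta> \<le> 1 / (4 * (real DIM('a) + 1)\<^sup>2)"
    using beta_small by simp
qed

lemma slack:
  defines "slack \<equiv> (1 + \<beta>)\<^sup>2 * (1 - (\<Sum>t\<in>T. (l t)\<^sup>2)) - 2 * R\<^sup>2"
  shows "0 \<le> slack"
    and "\<And>t t'. t \<in> T \<Longrightarrow> t' \<in> T \<Longrightarrow> t \<noteq> t' \<Longrightarrow>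
           l t * l t' * ((1 + \<beta>)\<^sup>2 - (dist t t')\<^sup>2) \<le> slack"
  using weighted_diameter_slack[OF finite_support weights_nonneg weights_sum weighted_centre
          dist_centre dist_support_le]
  by (simp_all add: slack_def)

lemma double_radius_sq_ge: "real DIM('a) / (real DIM('a) + 1) \<le> 2 * R\<^sup>2"
proof -
  have "(Jung DIM('a))\<^sup>2 \<le> R\<^sup>2"
    using Jung_le_radius Jung_nonneg by (intro power_mono) auto
  thus ?thesis by (simp flip: Jung_sq_double)
qed

lemma card_support: "card T = DIM('a) + 1"
proof (rule ccontr)
  define d where "d = real DIM('a)"
  define Q where "Q = (\<Sum>t\<in>T. (l t)\<^sup>2)"
  assume "card T \<noteq> DIM('a) + 1"
  hence "card T \<le> DIM('a)" using card_support_le by simp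
  have "T \<noteq> {}" using weights_sum by auto
  hence "card T > 0" using finite_support by (simp add: card_gt_0_iff)
  have "1 / d \<le> 1 / real (card T)"
    using \<open>card T \<le> DIM('a)\<close> \<open>card T > 0\<close> by (simp add: d_def frac_le)
  also have "\<dots> \<le> Q"
    using sum_sq_deviation[OF finite_support \<open>T \<noteq> {}\<close> weights_sum]
          sum_nonneg[of T "\<lambda>t. (l t - 1 / real (card T))\<^sup>2"]
    by (simp add: Q_def)
  finally have "1 - Q \<le> (d - 1) / d"
    using DIM_positive[where 'a='a] by (simp add: d_def diff_divide_distrib)
  hence "(1 + \<beta>)\<^sup>2 * (1 - Q) \<le> (1 + \<beta>)\<^sup>2 * ((d - 1) / d)"
    by (rule mult_left_mono) simp
  also have "\<dots> = (1 + ((1 + \<beta>)\<^sup>2 - 1)) * ((d - 1) / d)"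
    by simp
  also have "\<dots> < d / (d + 1)"
    using card_contradiction_bound[of d "(1 + \<beta>)\<^sup>2 - 1"] excess_le beta_nonneg DIM_positive[where 'a='a]
    by (simp add: d_def power2_eq_square algebra_simps)
  finally show False
    using slack(1) double_radius_sq_ge by (simp add: Q_def d_def)
qed

lemma sum_sq_deviation_support:
  "(\<Sum>t\<in>T. (l t - 1 / (real DIM('a) + 1))\<^sup>2) = (\<Sum>t\<in>T. (l t)\<^sup>2) - 1 / (real DIM('a) + 1)"
proof -
  have "T \<noteq> {}" using weights_sum by auto
  from sum_sq_deviation[OF finite_support this weights_sum]
  show ?thesis unfolding card_support by (simp add: add.commute)
qed

lemma sum_sq_weights_bounds:
  "1 / (real DIM('a) + 1) \<le> (\<Sum>t\<in>T. (l t)\<^sup>2)"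
  "(\<Sum>t\<in>T. (l t)\<^sup>2) - 1 / (real DIM('a) + 1) \<le> (1 + \<beta>)\<^sup>2 - 1"
proof -
  define m where "m = real DIM('a) + 1"
  define Q where "Q = (\<Sum>t\<in>T. (l t)\<^sup>2)"
  define E where "E = (1 + \<beta>)\<^sup>2 - 1"
  have "0 \<le> (\<Sum>t\<in>T. (l t - 1 / m)\<^sup>2)"
    by (simp add: sum_nonneg)
  thus "1 / (real DIM('a) + 1) \<le> Q"
    using sum_sq_deviation_support by (simp add: Q_def m_def)
  have "0 \<le> E * Q" using beta_nonneg by (simp add: E_def Q_def sum_nonneg)
  have "1 - 1 / m = real DIM('a) / m" by (simp add: m_def field_simps)
  also have "\<dots> \<le> (1 + E) * (1 - Q)"
    using slack(1) double_radius_sq_ge by (simp add: m_def E_def Q_def)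
  finally show "Q - 1 / (real DIM('a) + 1) \<le> E"
    using \<open>0 \<le> E * Q\<close> by (simp add: m_def algebra_simps)
qed

lemma weighted_diameter_le:
  "(1 + \<beta>)\<^sup>2 * (1 - (\<Sum>t\<in>T. (l t)\<^sup>2)) \<le> (1 + \<beta>)\<^sup>2 * (real DIM('a) / (real DIM('a) + 1))"
proof (rule mult_left_mono)
  have "1 - 1 / (real DIM('a) + 1) = real DIM('a) / (real DIM('a) + 1)"
    by (simp add: field_simps)
  thus "1 - (\<Sum>t\<in>T. (l t)\<^sup>2) \<le> real DIM('a) / (real DIM('a) + 1)"
    using sum_sq_weights_bounds(1) by linarith
qed simp

lemma radius_le: "R \<le> Jung DIM('a) * (1 + \<beta>)"
proof -
  have "2 * R\<^sup>2 \<le> (1 + \<beta>)\<^sup>2 * (1 - (\<Sum>t\<in>T. (l t)\<^sup>2))"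
    using slack(1) by simp
  also have "\<dots> \<le> (1 + \<beta>)\<^sup>2 * (real DIM('a) / (real DIM('a) + 1))"
    by (rule weighted_diameter_le)
  also have "\<dots> = 2 * (Jung DIM('a) * (1 + \<beta>))\<^sup>2"
    by (simp add: power_mult_distrib flip: Jung_sq_double)
  finally have "R\<^sup>2 \<le> (Jung DIM('a) * (1 + \<beta>))\<^sup>2" by simp
  moreover have "0 \<le> Jung DIM('a) * (1 + \<beta>)"
    using Jung_nonneg[of "DIM('a)"] beta_nonneg by simp
  ultimately show ?thesis by (rule power2_le_imp_le)
qed

lemma weight_ge: "t \<in> T \<Longrightarrow> 1 / (2 * (real DIM('a) + 1)) \<le> l t"
proof -
  assume "t \<in> T"
  define m where "m = real DIM('a) + 1"
  have "(l t - 1 / m)\<^sup>2 \<le> (\<Sum>t\<in>T. (l t - 1 / m)\<^sup>2)"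
    using finite_support \<open>t \<in> T\<close> by (intro member_le_sum) auto
  also have "\<dots> = (\<Sum>t\<in>T. (l t)\<^sup>2) - 1 / m"
    unfolding m_def by (rule sum_sq_deviation_support)
  also have "\<dots> \<le> (1 + \<beta>)\<^sup>2 - 1"
    unfolding m_def by (rule sum_sq_weights_bounds(2))
  also have "\<dots> \<le> 3 * \<beta>"
    by (rule excess_le(1))
  also have "\<dots> \<le> (1 / (2 * m))\<^sup>2"
    using excess_le(2)[folded m_def] by (simp add: power_divide power_mult_distrib)
  finally have "\<bar>l t - 1 / m\<bar> \<le> 1 / (2 * m)"
    using abs_le_square_iff[of "l t - 1 / m" "1 / (2 * m)"] by (simp add: m_def)
  moreover have "1 / m - 1 / (2 * m) = 1 / (2 * m)"
    by (simp add: m_def field_simps)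
  ultimately have "1 / (2 * m) \<le> l t" unfolding abs_le_iff by linarith
  thus ?thesis by (simp add: m_def)
qed

lemma sq_dist_ge:
  assumes "t \<in> T" "t' \<in> T" "t \<noteq> t'"
  shows "1 - 12 * (real DIM('a) + 1)\<^sup>2 * \<beta> \<le> (dist t t')\<^sup>2"
proof -
  define m where "m = real DIM('a) + 1"
  define D2 where "D2 = (1 + \<beta>)\<^sup>2"
  have gap: "0 \<le> D2 - (dist t t')\<^sup>2"
    using dist_support_le[OF assms(1,2)] by (simp add: D2_def power_mono)
  have "m > 0" by (simp add: m_def)
  have "(D2 - (dist t t')\<^sup>2) / (4 * m\<^sup>2) = 1 / (2 * m) * (1 / (2 * m)) * (D2 - (dist t t')\<^sup>2)"
    by (simp add: power2_eq_square)
  also have "\<dots> \<le> l t * l t' * (D2 - (dist t t')\<^sup>2)"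
    using weight_ge[OF assms(1)] weight_ge[OF assms(2)] weights_nonneg[OF assms(1)] gap
    by (intro mult_right_mono mult_mono) (simp_all add: m_def)
  also have "\<dots> \<le> D2 * (1 - (\<Sum>t\<in>T. (l t)\<^sup>2)) - 2 * R\<^sup>2"
    using slack(2)[OF assms] by (simp add: D2_def)
  also have "\<dots> \<le> D2 * (real DIM('a) / m) - real DIM('a) / m"
    using weighted_diameter_le[folded D2_def m_def] double_radius_sq_ge[folded m_def]
    by (rule diff_mono)
  also have "\<dots> = (D2 - 1) * (real DIM('a) / m)"
    by (simp add: left_diff_distrib diff_divide_distrib)
  also have "\<dots> \<le> 3 * \<beta> * 1"
    using excess_le(1) beta_nonneg by (intro mult_mono) (simp_all add: D2_def m_def)
  finally have "D2 - (dist t t')\<^sup>2 \<le> 12 * m\<^sup>2 * \<beta>"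
    using \<open>m > 0\<close> by (simp add: pos_divide_le_eq mult_ac)
  moreover have "1 \<le> D2" using beta_nonneg by (simp add: D2_def)
  ultimately show ?thesis unfolding m_def by linarith
qed

lemma almost_regular_enumeration:
  assumes "bij_betw e {..<Suc DIM('a)} T"
  shows "almost_regular e (Suc DIM('a)) (12 * (real DIM('a) + 1)\<^sup>2 * \<beta>)"
  unfolding almost_regular_def
proof (intro allI impI)
  fix i j assume ij: "i < Suc DIM('a)" "j < Suc DIM('a)" "i \<noteq> j"
  hence "e i \<in> T" "e j \<in> T" "e i \<noteq> e j"
    using assms by (auto simp: bij_betw_def inj_on_def)
  have "(dist (e i) (e j))\<^sup>2 \<le> (1 + \<beta>)\<^sup>2"
    using dist_support_le[OF \<open>e i \<in> T\<close> \<open>e j \<in> T\<close>] by (simp add: power_mono)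
  moreover have "1 \<le> (real DIM('a) + 1)\<^sup>2"
    by (simp add: one_le_power)
  hence "3 \<le> 12 * (real DIM('a) + 1)\<^sup>2"
    by linarith
  hence "3 * \<beta> \<le> 12 * (real DIM('a) + 1)\<^sup>2 * \<beta>"
    using beta_nonneg by (rule mult_right_mono)
  ultimately show "\<bar>(dist (e i) (e j))\<^sup>2 - 1\<bar> \<le> 12 * (real DIM('a) + 1)\<^sup>2 * \<beta>"
    using excess_le(1) sq_dist_ge[OF \<open>e i \<in> T\<close> \<open>e j \<in> T\<close> \<open>e i \<noteq> e j\<close>]
    unfolding abs_le_iff by linarith
qed

lemma radius_le_Jung_plus: "R \<le> Jung DIM('a) + \<beta>"
proof -
  have "Jung DIM('a) * \<beta> \<le> 1 * \<beta>"
    using Jung_le_1 beta_nonneg by (rule mult_right_mono)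
  thus ?thesis
    using radius_le[unfolded distrib_left mult_1_right] by linarith
qed

lemma regular_simplex_close:
  defines "K \<equiv> 12 * (real DIM('a) + 1)\<^sup>2"
  assumes approx: "\<forall>(v :: nat \<Rightarrow> 'a) \<epsilon>. 0 \<le> \<epsilon> \<and> \<epsilon> \<le> \<delta> \<and> almost_regular v (Suc DIM('a)) \<epsilon> \<longrightarrow>
                     (\<exists>y. regular_simplex y (Suc DIM('a)) \<and> (\<forall>i<Suc DIM('a). dist (y i) (v i) \<le> C * \<epsilon>))"
    and "K * \<beta> \<le> \<delta>" "0 \<le> C" "(1 + C * K) * \<beta> \<le> 1"
  shows "\<exists>y. regular_simplex y (Suc DIM('a)) \<and> (\<forall>k<Suc DIM('a). \<exists>t\<in>T. dist (y k) t \<le> C * K * \<beta>) \<and>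
           dist c (centroid y (Suc DIM('a))) \<le> 3 * (real (Suc DIM('a)))\<^sup>2 * ((1 + C * K) * \<beta>)"
proof -
  obtain e where e: "bij_betw e {..<Suc DIM('a)} T"
    using ex_bij_betw_nat_finite[OF finite_support] card_support by (auto simp: atLeast0LessThan)
  moreover have "0 \<le> K * \<beta>"
    using beta_nonneg by (simp add: K_def)
  ultimately obtain y where reg: "regular_simplex y (Suc DIM('a))"
    and close: "\<forall>i<Suc DIM('a). dist (y i) (e i) \<le> C * (K * \<beta>)"
    using approx almost_regular_enumeration[OF e, folded K_def] \<open>K * \<beta> \<le> \<delta>\<close> by blast
  have e_in: "e k \<in> T" if "k < Suc DIM('a)" for k
    using e that by (auto dest: bij_betwE)
  have "dist (y k) c \<le> Jung DIM('a) + (1 + C * K) * \<beta>" if "k < Suc DIM('a)" for k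
  proof -
    have "(1 + C * K) * \<beta> = \<beta> + C * (K * \<beta>)"
      by (simp add: algebra_simps)
    thus ?thesis
      using dist_triangle[of "y k" c "e k"] close[rule_format, OF that] dist_centre[OF e_in[OF that]]
            radius_le_Jung_plus
      by linarith
  qed
  moreover have "0 \<le> (1 + C * K) * \<beta>"
    using \<open>0 \<le> C\<close> beta_nonneg by (simp add: K_def)
  ultimately have "dist c (centroid y (Suc DIM('a))) \<le> 3 * (real (Suc DIM('a)))\<^sup>2 * ((1 + C * K) * \<beta>)"
    using dist_centroid_le[OF reg] \<open>(1 + C * K) * \<beta> \<le> 1\<close> by blast
  thus ?thesis
    using reg close e_in by (auto simp: mult.assoc)
qed

end

section \<open>Witnesses\<close>

lemma jung_support_of_compact:
  fixes S :: "'a::euclidean_space set"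
  assumes S: "compact S" "S \<noteq> {}" and diam: "diameter S \<le> 1 + \<beta>"
    and rad: "Jung DIM('a) \<le> cheb_rad S" and \<beta>: "0 \<le> \<beta>" "\<beta> \<le> 1 / (12 * (real DIM('a) + 1)\<^sup>2)"
  obtains T l c R where "T \<subseteq> S" "\<And>x. x \<in> S \<Longrightarrow> dist x c \<le> R" "jung_support T l c R \<beta>"
proof -
  obtain R c T l where R: "cheb_rad S \<le> R" "\<And>x. x \<in> S \<Longrightarrow> dist x c \<le> R"
    and T: "finite T" "T \<subseteq> S" "card T \<le> DIM('a) + 1" "\<And>t. t \<in> T \<Longrightarrow> dist t c = R"
    and l: "\<And>t. t \<in> T \<Longrightarrow> 0 \<le> l t" "sum l T = 1" "(\<Sum>t\<in>T. l t *\<^sub>R t) = c"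
    by (rule chebyshev_support[OF S]) (rule that)
  have "dist t t' \<le> 1 + \<beta>" if "t \<in> T" "t' \<in> T" for t t'
  proof -
    have "dist t t' \<le> diameter S"
      using T(2) that by (intro diameter_bounded_bound[OF compact_imp_bounded[OF S(1)]]) auto
    thus ?thesis using diam by linarith
  qed
  hence "jung_support T l c R \<beta>"
    using jung_support.intro[OF T(1,3) l T(4) order_trans[OF rad R(1)]] \<beta> by blast
  thus ?thesis using that T(2) R(2) by blast
qed

lemma witness_sq_dist_ge:
  fixes S W :: "'a::euclidean_space set"
  assumes wit: "witness S W" and S: "bounded S" and diam: "diameter S \<le> 1 + \<beta>"
    and \<beta>: "0 \<le> \<beta>" "\<beta> \<le> 1 / (12 * (real DIM('a) + 1)\<^sup>2)"
    and w: "w \<in> W" "w' \<in> W" "w \<noteq> w'"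
  shows "1 - 12 * (real DIM('a) + 1)\<^sup>2 * \<beta> \<le> (dist w w')\<^sup>2"
proof -
  have "W \<subseteq> S" and card_W: "card W = DIM('a) + 1" and "Jung DIM('a) \<le> cheb_rad W"
    using wit by (auto simp: witness_def)
  hence "finite W" by (intro card_ge_0_finite) simp
  have "W \<noteq> {}" using w by auto
  have "diameter W \<le> 1 + \<beta>"
    using diameter_subset[OF \<open>W \<subseteq> S\<close> S] diam by linarith
  obtain T l c R where "T \<subseteq> W" "\<And>x. x \<in> W \<Longrightarrow> dist x c \<le> R" and js: "jung_support T l c R \<beta>"
    by (rule jung_support_of_compact[OF finite_imp_compact[OF \<open>finite W\<close>] \<open>W \<noteq> {}\<close>
          \<open>diameter W \<le> 1 + \<beta>\<close> \<open>Jung DIM('a) \<le> cheb_rad W\<close> \<beta>]) (rule that)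
  have "T = W"
    using card_subset_eq[OF \<open>finite W\<close> \<open>T \<subseteq> W\<close>] jung_support.card_support[OF js] card_W by simp
  thus ?thesis
    using jung_support.sq_dist_ge[OF js] w by simp
qed

lemma regular_simplex_near_compact:
  fixes S :: "'a::euclidean_space set" and C \<beta> \<delta> :: real
  defines "n \<equiv> Suc DIM('a)" and "K \<equiv> 12 * (real DIM('a) + 1)\<^sup>2"
  defines "A \<equiv> (1 + C * K) * (1 + 3 * (real n)\<^sup>2)"
  assumes approx: "\<forall>(v :: nat \<Rightarrow> 'a) \<epsilon>. 0 \<le> \<epsilon> \<and> \<epsilon> \<le> \<delta> \<and> almost_regular v n \<epsilon> \<longrightarrow>
                     (\<exists>y. regular_simplex y n \<and> (\<forall>i<n. dist (y i) (v i) \<le> C * \<epsilon>))"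
    and "0 \<le> C" and S: "compact S" "diameter S \<le> 1 + \<beta>" "Jung DIM('a) \<le> cheb_rad S"
    and \<beta>: "0 \<le> \<beta>" "K * \<beta> \<le> 1" "K * \<beta> \<le> \<delta>" "(1 + C * K) * \<beta> \<le> 1"
  shows "\<exists>y. regular_simplex y n \<and> (\<forall>x\<in>S. dist x (centroid y n) \<le> Jung DIM('a) + A * \<beta> \<and>
                                            (\<forall>k<n. dist x (y k) \<le> 1 + A * \<beta>))"
proof (cases "S = {}")
  case True
  thus ?thesis using regular_simplex_exists[of n] by (auto simp: n_def)
next
  case False
  have "K > 0" by (simp add: K_def)
  hence "\<beta> \<le> 1 / (12 * (real DIM('a) + 1)\<^sup>2)"
    using \<beta>(2) by (simp add: K_def pos_le_divide_eq mult.commute)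
  then obtain T l c R where "T \<subseteq> S" and in_ball: "\<And>x. x \<in> S \<Longrightarrow> dist x c \<le> R"
    and js: "jung_support T l c R \<beta>"
    by (rule jung_support_of_compact[OF S(1) False S(2,3) \<beta>(1)]) (rule that)
  obtain y where reg: "regular_simplex y n" and near_T: "\<forall>k<n. \<exists>t\<in>T. dist (y k) t \<le> C * K * \<beta>"
    and centre: "dist c (centroid y n) \<le> 3 * (real n)\<^sup>2 * ((1 + C * K) * \<beta>)"
    using jung_support.regular_simplex_close[OF js approx[unfolded n_def] _ \<open>0 \<le> C\<close>] \<beta>(3,4)
    by (auto simp: n_def K_def)
  have "\<beta> \<le> (1 + C * K) * \<beta>"
    using \<open>0 \<le> C\<close> \<open>K > 0\<close> \<beta>(1) by (simp add: algebra_simps)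
  have "0 \<le> 3 * (real n)\<^sup>2 * ((1 + C * K) * \<beta>)"
    using \<open>0 \<le> C\<close> \<open>K > 0\<close> \<beta>(1) by simp
  have "dist x (centroid y n) \<le> Jung DIM('a) + A * \<beta>" if "x \<in> S" for x
    using dist_triangle[of x "centroid y n" c] in_ball[OF that] centre
      jung_support.radius_le_Jung_plus[OF js] \<open>\<beta> \<le> (1 + C * K) * \<beta>\<close>
    by (simp add: A_def algebra_simps)
  moreover have "dist x (y k) \<le> 1 + A * \<beta>" if "x \<in> S" "k < n" for x k
  proof -
    obtain t where "t \<in> T" "dist (y k) t \<le> C * K * \<beta>" using near_T \<open>k < n\<close> by blast
    moreover have "dist x t \<le> 1 + \<beta>"
      using diameter_bounded_bound[OF compact_imp_bounded[OF S(1)] \<open>x \<in> S\<close>] \<open>t \<in> T\<close> \<open>T \<subseteq> S\<close> S(2)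
      by fastforce
    ultimately have "dist x (y k) \<le> 1 + (1 + C * K) * \<beta>"
      using dist_triangle[of x "y k" t] by (simp add: dist_commute algebra_simps)
    also have "\<dots> \<le> 1 + A * \<beta>"
      using \<open>0 \<le> 3 * (real n)\<^sup>2 * ((1 + C * K) * \<beta>)\<close> by (simp add: A_def algebra_simps)
    finally show ?thesis .
  qed
  ultimately show ?thesis using reg by blast
qed

lemma hausdorff_dist_le_matching:
  fixes A B :: "'a::metric_space set"
  assumes "finite A" "finite B" "card A = card B" "A \<noteq> {}"
    and close: "\<And>a. a \<in> A \<Longrightarrow> \<exists>b\<in>B. dist a b \<le> r"
    and sep: "\<And>a a'. a \<in> A \<Longrightarrow> a' \<in> A \<Longrightarrow> a \<noteq> a' \<Longrightarrow> 2 * r < dist a a'"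
  shows "hausdorff_dist A B \<le> r"
proof -
  define f where "f a = (SOME b. b \<in> B \<and> dist a b \<le> r)" for a
  have f: "f a \<in> B" "dist a (f a) \<le> r" if "a \<in> A" for a
    using someI_ex[OF close[OF that, unfolded Bex_def]] by (simp_all add: f_def)
  have "inj_on f A"
  proof (rule inj_onI, rule ccontr)
    fix a a' assume "a \<in> A" "a' \<in> A" "f a = f a'" "a \<noteq> a'"
    hence "dist a a' \<le> dist a (f a) + dist a' (f a')"
      using dist_triangle[of a a' "f a"] by (simp add: dist_commute)
    hence "dist a a' \<le> 2 * r"
      using f(2)[OF \<open>a \<in> A\<close>] f(2)[OF \<open>a' \<in> A\<close>] by linarith
    thus False using sep \<open>a \<in> A\<close> \<open>a' \<in> A\<close> \<open>a \<noteq> a'\<close> by fastforce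
  qed
  hence "f ` A = B"
    using f(1) assms(2,3) by (intro card_subset_eq) (auto simp: card_image)
  have "(INF b\<in>B. dist a b) \<le> r" if "a \<in> A" for a
    using f[OF that] by (intro cINF_lower2[where x = "f a"]) (auto intro: bdd_belowI2[where m = 0])
  moreover have "(INF a\<in>A. dist a b) \<le> r" if "b \<in> B" for b
  proof -
    obtain a where "a \<in> A" "b = f a" using \<open>f ` A = B\<close> \<open>b \<in> B\<close> by blast
    thus ?thesis
      using f by (intro cINF_lower2[where x = a]) (auto intro: bdd_belowI2[where m = 0])
  qed
  moreover have "B \<noteq> {}" using \<open>f ` A = B\<close> assms(4) by blast
  ultimately show ?thesis
    unfolding hausdorff_dist_def using assms(4) by (simp add: cSUP_least)
qed

lemma witness_hausdorff_dist_le: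
  fixes y :: "nat \<Rightarrow> 'a::euclidean_space"
  defines "n \<equiv> Suc DIM('a)" and "\<alpha> \<equiv> 7 * real DIM('a) / 2"
  defines "C \<equiv> 4 * \<alpha> + 6 * real n * (\<alpha> + 3)"
  assumes reg: "regular_simplex y n" and wit: "witness S W"
    and ball: "\<And>x. x \<in> S \<Longrightarrow> dist x (centroid y n) \<le> Jung DIM('a) + \<eta>"
    and near: "\<And>x k. x \<in> S \<Longrightarrow> k < n \<Longrightarrow> dist x (y k) \<le> 1 + \<eta>"
    and sep: "\<And>w w'. w \<in> W \<Longrightarrow> w' \<in> W \<Longrightarrow> w \<noteq> w' \<Longrightarrow> 1 - \<eta> \<le> (dist w w')\<^sup>2"
    and \<eta>: "0 \<le> \<eta>" "4 * C * \<eta> \<le> 1"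
  shows "hausdorff_dist W (y ` {..<n}) \<le> C * \<eta>"
proof (rule hausdorff_dist_le_matching)
  have "W \<subseteq> S" and card_W: "card W = n"
    using wit by (auto simp: witness_def n_def)
  thus "finite W" "W \<noteq> {}" by (auto intro: card_ge_0_finite simp: n_def)
  have "regular_unit_simplex (y ` {..<n})"
    using regular_unit_simplex_image[OF reg[unfolded n_def]] by (simp add: n_def)
  thus "card W = card (y ` {..<n})" "finite (y ` {..<n})"
    using card_W by (simp_all add: regular_unit_simplex_def n_def)
  have "1 * 1 \<le> real n * (\<alpha> + 3)"
    by (intro mult_mono) (simp_all add: n_def \<alpha>_def)
  hence "1 \<le> C" "6 * (real n * (\<alpha> + 3)) \<le> C"
    by (simp_all add: C_def \<alpha>_def)
  have "1 * \<eta> \<le> C * \<eta>"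
    using \<open>1 \<le> C\<close> \<eta>(1) by (rule mult_right_mono)
  moreover have "6 * (real n * (\<alpha> + 3)) * \<eta> \<le> C * \<eta>"
    using \<open>6 * (real n * (\<alpha> + 3)) \<le> C\<close> \<eta>(1) by (rule mult_right_mono)
  ultimately have small: "real n * ((\<alpha> + 3) * \<eta>) \<le> 1" "\<eta> \<le> 1 / 4" "2 * (C * \<eta>) \<le> 1 / 2"
    using \<eta>(2) by (simp_all add: mult.assoc)
  have "\<And>w. w \<in> W \<Longrightarrow> dist w (centroid y (Suc DIM('a))) \<le> Jung DIM('a) + \<eta>"
    "\<And>w k. w \<in> W \<Longrightarrow> k < Suc DIM('a) \<Longrightarrow> dist w (y k) \<le> 1 + \<eta>"
    using ball near \<open>W \<subseteq> S\<close> by (auto simp: n_def)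
  note near_vertex = separated_points_near_vertices[OF reg[unfolded n_def] \<open>finite W\<close>
      card_W[unfolded n_def] _ this sep \<eta>(1)]
  show "\<exists>b\<in>y ` {..<n}. dist w b \<le> C * \<eta>" if "w \<in> W" for w
    using near_vertex[OF that] small(1) by (auto simp: n_def \<alpha>_def C_def)
  show "2 * (C * \<eta>) < dist w w'" if "w \<in> W" "w' \<in> W" "w \<noteq> w'" for w w'
  proof -
    have "(2 * (C * \<eta>))\<^sup>2 \<le> (1 / 2)\<^sup>2"
      using small(3) \<eta>(1) \<open>1 \<le> C\<close> by (intro power_mono) simp_all
    hence "(2 * (C * \<eta>))\<^sup>2 < (dist w w')\<^sup>2"
      using sep[OF that] small(2) by (simp add: power2_eq_square)
    thus ?thesis by (rule power_less_imp_less_base) simp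
  qed
qed

lemma hausdorff_close_regular_simplex:
  fixes S :: "'a::euclidean_space set" and C \<beta> \<delta> :: real
  defines "n \<equiv> Suc DIM('a)" and "K \<equiv> 12 * (real DIM('a) + 1)\<^sup>2" and "\<alpha> \<equiv> 7 * real DIM('a) / 2"
  defines "A \<equiv> (1 + C * K) * (1 + 3 * (real n)\<^sup>2) + K" and "C\<^sub>H \<equiv> 4 * \<alpha> + 6 * real n * (\<alpha> + 3)"
  assumes approx: "\<forall>(v :: nat \<Rightarrow> 'a) \<epsilon>. 0 \<le> \<epsilon> \<and> \<epsilon> \<le> \<delta> \<and> almost_regular v n \<epsilon> \<longrightarrow>
                     (\<exists>y. regular_simplex y n \<and> (\<forall>i<n. dist (y i) (v i) \<le> C * \<epsilon>))"
    and "0 \<le> C" and S: "compact S" "diameter S \<le> 1 + \<beta>" "Jung DIM('a) \<le> cheb_rad S"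
    and \<beta>: "0 \<le> \<beta>" "K * \<beta> \<le> 1" "K * \<beta> \<le> \<delta>" "(1 + C * K) * \<beta> \<le> 1" "4 * C\<^sub>H * A * \<beta> \<le> 1"
  shows "\<exists>y. regular_simplex y n \<and> (\<forall>W. witness S W \<longrightarrow> hausdorff_dist W (y ` {..<n}) \<le> C\<^sub>H * A * \<beta>)"
proof -
  have "K > 0" by (simp add: K_def)
  have bounds: "K * \<beta> \<le> A * \<beta>" "(1 + C * K) * (1 + 3 * (real n)\<^sup>2) * \<beta> \<le> A * \<beta>"
    using \<beta>(1) \<open>K > 0\<close> \<open>0 \<le> C\<close> by (simp_all add: A_def mult_right_mono)
  obtain y where reg: "regular_simplex y n" and near:
    "\<forall>x\<in>S. dist x (centroid y n) \<le> Jung DIM('a) + (1 + C * K) * (1 + 3 * (real n)\<^sup>2) * \<beta> \<and>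
            (\<forall>k<n. dist x (y k) \<le> 1 + (1 + C * K) * (1 + 3 * (real n)\<^sup>2) * \<beta>)"
    using regular_simplex_near_compact[OF approx[unfolded n_def] \<open>0 \<le> C\<close> S \<beta>(1)
            \<beta>(2-4)[unfolded K_def]]
    by (auto simp: n_def K_def)
  have "dist x (centroid y n) \<le> Jung DIM('a) + A * \<beta>" if "x \<in> S" for x
    using near bounds(2) that by fastforce
  moreover have "dist x (y k) \<le> 1 + A * \<beta>" if "x \<in> S" "k < n" for x k
    using near bounds(2) that by fastforce
  moreover have "1 - A * \<beta> \<le> (dist w w')\<^sup>2"
    if "witness S W" "w \<in> W" "w' \<in> W" "w \<noteq> w'" for W w w'
    using witness_sq_dist_ge[OF that(1) compact_imp_bounded[OF S(1)] S(2) \<beta>(1) _ that(2-4)]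
          \<beta>(2) bounds(1) \<open>K > 0\<close> by (simp add: K_def pos_le_divide_eq mult.commute)
  moreover have "4 * C\<^sub>H * (A * \<beta>) \<le> 1" "0 \<le> A * \<beta>"
    using \<beta>(1,5) \<open>K > 0\<close> \<open>0 \<le> C\<close> by (simp_all add: A_def mult.assoc)
  ultimately have "hausdorff_dist W (y ` {..<n}) \<le> C\<^sub>H * (A * \<beta>)" if "witness S W" for W
    using witness_hausdorff_dist_le[OF reg[unfolded n_def], of S W "A * \<beta>"] that
    by (simp add: C\<^sub>H_def \<alpha>_def n_def)
  thus ?thesis using reg by (auto simp: mult.assoc)
qed

lemma witnesses_close_to_regular_simplex:
  "\<exists>\<beta>0>0. \<exists>C>0. \<forall>(S :: 'a::euclidean_space set) \<beta>.
     compact S \<and> 0 \<le> \<beta> \<and> \<beta> \<le> \<beta>0 \<and> diameter S \<le> 1 + \<beta> \<and> Jung DIM('a) \<le> cheb_rad S \<longrightarrow>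
     (\<exists>y. regular_simplex y (Suc DIM('a)) \<and>
          (\<forall>W. witness S W \<longrightarrow> hausdorff_dist W (y ` {..<Suc DIM('a)}) \<le> C * \<beta>))"
proof -
  define n where "n = Suc DIM('a)"
  define K where "K = 12 * (real DIM('a) + 1)\<^sup>2"
  define \<alpha> where "\<alpha> = 7 * real DIM('a) / 2"
  define C\<^sub>H where "C\<^sub>H = 4 * \<alpha> + 6 * real n * (\<alpha> + 3)"
  obtain \<delta> C where "\<delta> > 0" "C > 0" and approx:
    "\<forall>(v :: nat \<Rightarrow> 'a) \<epsilon>. 0 \<le> \<epsilon> \<and> \<epsilon> \<le> \<delta> \<and> almost_regular v n \<epsilon> \<longrightarrow>
       (\<exists>y. regular_simplex y n \<and> (\<forall>i<n. dist (y i) (v i) \<le> C * \<epsilon>))"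
    using almost_regular_near_regular[of n] by (auto simp: n_def)
  define A where "A = (1 + C * K) * (1 + 3 * (real n)\<^sup>2) + K"
  define \<beta>0 where "\<beta>0 = min (min (1 / K) (\<delta> / K)) (min (1 / (1 + C * K)) (1 / (4 * C\<^sub>H * A)))"
  have "K > 0" "A > 0" "C\<^sub>H > 0"
    using \<open>C > 0\<close> by (simp_all add: K_def A_def C\<^sub>H_def \<alpha>_def add_pos_nonneg)
  hence "\<beta>0 > 0" "C\<^sub>H * A > 0"
    using \<open>\<delta> > 0\<close> \<open>C > 0\<close> by (simp_all add: \<beta>0_def add_pos_nonneg)
  moreover have "\<exists>y. regular_simplex y n \<and> (\<forall>W. witness S W \<longrightarrow> hausdorff_dist W (y ` {..<n}) \<le> C\<^sub>H * A * \<beta>)"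
    if "compact S" "diameter S \<le> 1 + \<beta>" "Jung DIM('a) \<le> cheb_rad S" "0 \<le> \<beta>" "\<beta> \<le> \<beta>0"
    for S :: "'a set" and \<beta>
  proof (rule hausdorff_close_regular_simplex[OF approx[unfolded n_def], folded n_def K_def \<alpha>_def,
                                               folded A_def C\<^sub>H_def])
    show "K * \<beta> \<le> 1" "K * \<beta> \<le> \<delta>" "(1 + C * K) * \<beta> \<le> 1" "4 * C\<^sub>H * A * \<beta> \<le> 1"
      using that(5) \<open>K > 0\<close> \<open>C > 0\<close> \<open>A > 0\<close> \<open>C\<^sub>H > 0\<close>
      by (simp_all add: \<beta>0_def pos_le_divide_eq mult.commute add_pos_nonneg)
  qed (use that \<open>C > 0\<close> in auto)
  ultimately show ?thesis
    unfolding n_def by (intro exI[of _ \<beta>0] exI[of _ "C\<^sub>H * A"] conjI allI impI) auto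
qed

theorem mainTheorem4:
  shows "\<exists>\<beta>d > 0. \<exists>Cd > 0. \<forall>(S :: 'a::euclidean_space set) \<beta>.
           compact S \<and> 0 \<le> \<beta> \<and> \<beta> \<le> \<beta>d \<and> diameter S \<le> 1 + \<beta> \<and> cheb_rad S \<ge> Jung DIM('a)
           \<longrightarrow> (\<exists>\<Delta>. regular_unit_simplex \<Delta> \<and>
                  (\<forall>W. witness S W \<longrightarrow> hausdorff_dist W \<Delta> \<le> Cd * \<beta>))"
  using witnesses_close_to_regular_simplex[where 'a='a] regular_unit_simplex_image[where 'a='a]
  by meson

end
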